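(* Let $(E,C)$ be a finite bipartite separated graph and let $A_{\mathrm{DE}}\subseteq E^1\cup(E^1)^{-1}$ be the set of dead ends. Then, for $v\in E^0$, the clopen set $\Omega(E,C)_v$ contains an isolated point if and only if $v\in V(A_{\mathrm{DE}})$. Consequently $\Omega(E,C)$ is a Cantor space if and only if $V(A_{\mathrm{DE}})=\emptyset$.
   Context: Separated graph $(E,C)$: $E=(E^0,E^1,r,s)$, $C=\bigsqcup_vC_v$ with $C_v$ a partition of $r^{-1}(v)$ into non-empty sets; $X_e$ is the element of $C$ containing $e$. Finite bipartite: $E$ finite, $E^0=E^{0,0}\sqcup E^{0,1}$, $s(E^1)=E^{0,1}$, $r(E^1)=E^{0,0}$. Admissible paths: words $\sigma_m\cdots\sigma_1$ in $E^1\sqcup(E^1)^{-1}$ forming a path in the double graph (where $e^{-1}$ goes from $r(e)$ to $s(e)$; paths are read right to left) such that no subword $ef^{-1}$ has $e=f$ and no subword $e^{-1}f$ has $X_e=X_f$; vertices are the trivial admissible paths. Range and source of a path are taken in the double graph. A choice path is an admissible path $\alpha=e\beta$ with $e\in E^1$ such that there exists $X\in C_{r(e)}$, $X\ne X_e$, with $|X|\ge2$. An element $\sigma\in E^1\cup(E^1)^{-1}$ is a dead end if no choice path has $\sigma$ as its initial (rightmost) letter. A set $A\subseteq E^1\cup(E^1)^{-1}$ is path closed if for every admissible path $\alpha$ whose initial letter lies in $A$, its terminal (leftmost) letter lies in $A$. $A$ is $\partial$-closed if: (1) whenever $v\in E^{0,1}$, $|s^{-1}(v)|\ge2$, $e\in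 s^{-1}(v)$ and $s^{-1}(v)\setminus\{e\}\subseteq A$, then $e^{-1}\in A$; (2) whenever $v\in E^{0,0}$, $|C_v|\ge2$, $X\in C_v$ and $Y^{-1}\cap A\ne\emptyset$ for every $Y\in C_v\setminus\{X\}$, then $X\subseteq A$. $\overline A$ is the smallest $\partial$-closed set containing $A$, and $V(A)=\{v\in E^{0,0}:X^{-1}\cap\overline A\ne\emptyset\ \forall X\in C_v\}\cup\{v\in E^{0,1}:s^{-1}(v)\subseteq\overline A\}$. Configuration space: $\mathbb F$ = free group on $E^1$; $\Omega(E,C)$ = set of $\xi\subseteq\mathbb F$ with $1\in\xi$, right-convex (if a reduced word $e_m^{\varepsilon_m}\cdots e_1^{\varepsilon_1}\in\xi$ then $e_k^{\varepsilon_k}\cdots e_1^{\varepsilon_1}\in\xi$ for $k<m$), and such that for every $\alpha\in\xi$ the set $\xi_\alpha=\{\sigma\in E^1\sqcup(E^1)^{-1}:\sigma\alpha\in\xi\}$ equals $s^{-1}(v)$ for some $v\in E^{0,1}$ or $\{e_X^{-1}:X\in C_v\}$ for some $v\in E^{0,0}$ and $e_X\in X$; topology from $\{0,1\}^{\mathbb F}$. For $v\in E^{0,1}$, $\Omega(E,C)_v=\{\xi:e\in\xi\}$ for any $e\in s^{-1}(v)$; for $v\in E^{0,0}$, $\Omega(E,C)_v=\{\xi:e^{-1}\in\xi\text{ for some }e\in X\}$ for any $X\in C_v$. *)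

theory Defs
  imports "HOL-Analysis.Analysis"
begin

(* Letters of E^1 \<sqcup> (E^1)^{-1}: Pos e = e, Neg e = e^{-1}. *)
datatype 'e letter = Pos 'e | Neg 'e

fun linv :: "'e letter \<Rightarrow> 'e letter" where
  "linv (Pos e) = Neg e" | "linv (Neg e) = Pos e"

definition letters :: "'e set \<Rightarrow> 'e letter set" where
  "letters E1 = Pos ` E1 \<union> Neg ` E1"

fun lsrc :: "('e \<Rightarrow> 'v) \<Rightarrow> ('e \<Rightarrow> 'v) \<Rightarrow> 'e letter \<Rightarrow> 'v" where
  "lsrc r s (Pos e) = s e" | "lsrc r s (Neg e) = r e"
fun lrng :: "('e \<Rightarrow> 'v) \<Rightarrow> ('e \<Rightarrow> 'v) \<Rightarrow> 'e letter \<Rightarrow> 'v" where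
  "lrng r s (Pos e) = r e" | "lrng r s (Neg e) = s e"

(* Finite bipartite separated graph; E^0 = E00 \<union> E01, C a set of classes *)
definition fin_bip_sep_graph ::
  "'v set \<Rightarrow> 'v set \<Rightarrow> 'e set \<Rightarrow> ('e \<Rightarrow> 'v) \<Rightarrow> ('e \<Rightarrow> 'v) \<Rightarrow> 'e set set \<Rightarrow> bool" where
  "fin_bip_sep_graph E00 E01 E1 r s C \<longleftrightarrow>
     finite E00 \<and> finite E01 \<and> finite E1 \<and> E00 \<inter> E01 = {} \<and>
     s ` E1 = E01 \<and> r ` E1 = E00 \<and>
     (\<forall>X\<in>C. X \<noteq> {} \<and> X \<subseteq> E1 \<and> (\<forall>e\<in>X. \<forall>f\<in>X. r e = r f)) \<and>
     (\<forall>e\<in>E1. \<exists>!X. X \<in> C \<and> e \<in> X)"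

definition Cv :: "('e \<Rightarrow> 'v) \<Rightarrow> 'e set set \<Rightarrow> 'v \<Rightarrow> 'e set set" where
  "Cv r C v = {X \<in> C. \<forall>e\<in>X. r e = v}"

definition cls :: "'e set set \<Rightarrow> 'e \<Rightarrow> 'e set" where
  "cls C e = (THE X. X \<in> C \<and> e \<in> X)"

(* A nonempty word \<sigma>_m ... \<sigma>_1 is represented by the list [\<sigma>_m, ..., \<sigma>_1];
   so the initial (rightmost) letter is the last list element, the terminal
   (leftmost) letter is the head. *)
definition adm_word ::
  "'e set \<Rightarrow> ('e \<Rightarrow> 'v) \<Rightarrow> ('e \<Rightarrow> 'v) \<Rightarrow> 'e set set \<Rightarrow> 'e letter list \<Rightarrow> bool" where
  "adm_word E1 r s C w \<longleftrightarrow> w \<noteq> [] \<and> set w \<subseteq> letters E1 \<and>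
     (\<forall>i. Suc i < length w \<longrightarrow>
        lsrc r s (w ! i) = lrng r s (w ! Suc i) \<and>
        \<not> (\<exists>e. w ! i = Pos e \<and> w ! Suc i = Neg e) \<and>
        \<not> (\<exists>e f. w ! i = Neg e \<and> w ! Suc i = Pos f \<and> cls C e = cls C f))"

definition choice_path ::
  "'e set \<Rightarrow> ('e \<Rightarrow> 'v) \<Rightarrow> ('e \<Rightarrow> 'v) \<Rightarrow> 'e set set \<Rightarrow> 'e letter list \<Rightarrow> bool" where
  "choice_path E1 r s C w \<longleftrightarrow> adm_word E1 r s C w \<and>
     (\<exists>e\<in>E1. hd w = Pos e \<and> (\<exists>X\<in>Cv r C (r e). X \<noteq> cls C e \<and> card X \<ge> 2))"

definition dead_ends ::
  "'e set \<Rightarrow> ('e \<Rightarrow> 'v) \<Rightarrow> ('e \<Rightarrow> 'v) \<Rightarrow> 'e set set \<Rightarrow> 'e letter set" where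
  "dead_ends E1 r s C = {\<sigma> \<in> letters E1. \<not> (\<exists>w. choice_path E1 r s C w \<and> last w = \<sigma>)}"

definition dclosed ::
  "'v set \<Rightarrow> 'v set \<Rightarrow> 'e set \<Rightarrow> ('e \<Rightarrow> 'v) \<Rightarrow> ('e \<Rightarrow> 'v) \<Rightarrow> 'e set set \<Rightarrow> 'e letter set \<Rightarrow> bool" where
  "dclosed E00 E01 E1 r s C A \<longleftrightarrow>
     (\<forall>v\<in>E01. card {e\<in>E1. s e = v} \<ge> 2 \<longrightarrow>
        (\<forall>e\<in>E1. s e = v \<longrightarrow> Pos ` ({f\<in>E1. s f = v} - {e}) \<subseteq> A \<longrightarrow> Neg e \<in> A)) \<and>
     (\<forall>v\<in>E00. card (Cv r C v) \<ge> 2 \<longrightarrow>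
        (\<forall>X\<in>Cv r C v. (\<forall>Y\<in>Cv r C v - {X}. Neg ` Y \<inter> A \<noteq> {}) \<longrightarrow> Pos ` X \<subseteq> A))"

definition dclosure ::
  "'v set \<Rightarrow> 'v set \<Rightarrow> 'e set \<Rightarrow> ('e \<Rightarrow> 'v) \<Rightarrow> ('e \<Rightarrow> 'v) \<Rightarrow> 'e set set \<Rightarrow> 'e letter set \<Rightarrow> 'e letter set" where
  "dclosure E00 E01 E1 r s C A =
     \<Inter>{B. B \<subseteq> letters E1 \<and> A \<subseteq> B \<and> dclosed E00 E01 E1 r s C B}"

definition Vset ::
  "'v set \<Rightarrow> 'v set \<Rightarrow> 'e set \<Rightarrow> ('e \<Rightarrow> 'v) \<Rightarrow> ('e \<Rightarrow> 'v) \<Rightarrow> 'e set set \<Rightarrow> 'e letter set \<Rightarrow> 'v set" where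
  "Vset E00 E01 E1 r s C A =
     {v\<in>E00. \<forall>X\<in>Cv r C v. Neg ` X \<inter> dclosure E00 E01 E1 r s C A \<noteq> {}} \<union>
     {v\<in>E01. Pos ` {e\<in>E1. s e = v} \<subseteq> dclosure E00 E01 E1 r s C A}"

(* Free group on E1: reduced words (same list convention) *)
definition reduced :: "'e set \<Rightarrow> 'e letter list \<Rightarrow> bool" where
  "reduced E1 w \<longleftrightarrow> set w \<subseteq> letters E1 \<and>
     (\<forall>i. Suc i < length w \<longrightarrow> w ! Suc i \<noteq> linv (w ! i))"

definition Fgrp :: "'e set \<Rightarrow> 'e letter list set" where
  "Fgrp E1 = {w. reduced E1 w}"

definition gmult :: "'e letter \<Rightarrow> 'e letter list \<Rightarrow> 'e letter list" where
  "gmult \<sigma> \<alpha> = (case \<alpha> of [] \<Rightarrow> [\<sigma>] | \<tau> # \<beta> \<Rightarrow> if \<tau> = linv \<sigma> then \<beta> else \<sigma> # \<alpha>)"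

definition xi_at :: "'e set \<Rightarrow> 'e letter list set \<Rightarrow> 'e letter list \<Rightarrow> 'e letter set" where
  "xi_at E1 \<xi> \<alpha> = {\<sigma> \<in> letters E1. gmult \<sigma> \<alpha> \<in> \<xi>}"

definition Omega ::
  "'v set \<Rightarrow> 'v set \<Rightarrow> 'e set \<Rightarrow> ('e \<Rightarrow> 'v) \<Rightarrow> ('e \<Rightarrow> 'v) \<Rightarrow> 'e set set \<Rightarrow> 'e letter list set set" where
  "Omega E00 E01 E1 r s C = {\<xi>. \<xi> \<subseteq> Fgrp E1 \<and> [] \<in> \<xi> \<and>
     (\<forall>\<alpha>\<in>\<xi>. \<forall>k. drop k \<alpha> \<in> \<xi>) \<and>
     (\<forall>\<alpha>\<in>\<xi>.
        (\<exists>v\<in>E01. xi_at E1 \<xi> \<alpha> = Pos ` {e\<in>E1. s e = v}) \<or>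
        (\<exists>v\<in>E00. \<exists>f. (\<forall>X\<in>Cv r C v. f X \<in> X) \<and>
            xi_at E1 \<xi> \<alpha> = {Neg (f X) | X. X \<in> Cv r C v}))}"

definition Omega_v ::
  "'v set \<Rightarrow> 'v set \<Rightarrow> 'e set \<Rightarrow> ('e \<Rightarrow> 'v) \<Rightarrow> ('e \<Rightarrow> 'v) \<Rightarrow> 'e set set \<Rightarrow> 'v \<Rightarrow> 'e letter list set set" where
  "Omega_v E00 E01 E1 r s C v =
     (if v \<in> E01 then {\<xi> \<in> Omega E00 E01 E1 r s C. \<exists>e\<in>E1. s e = v \<and> [Pos e] \<in> \<xi>}
      else {\<xi> \<in> Omega E00 E01 E1 r s C. \<exists>X\<in>Cv r C v. \<exists>e\<in>X. [Neg e] \<in> \<xi>})"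

(* topology on subsets of words, induced from {0,1}^(words) via characteristic functions *)
definition set_top :: "'w set topology" where
  "set_top = pullback_topology UNIV (\<lambda>\<xi> w. w \<in> \<xi>)
              (product_topology (\<lambda>_. discrete_topology (UNIV :: bool set)) UNIV)"

definition cantor_top :: "(nat \<Rightarrow> bool) topology" where
  "cantor_top = product_topology (\<lambda>_. discrete_topology (UNIV :: bool set)) UNIV"

end

theory Submission
  imports Defs
begin

text \<open>
  A configuration below a vertex \<open>v\<close> is a tree of reduced words, determined by \<open>v\<close> and by a
  choice, at each word ending in a positive edge \<open>e\<close>, of one edge from every other class at
  \<open>r(e)\<close>. It is isolated iff finitely many of these choices determine it.

  If \<open>v \<in> V(A\<^sub>D\<^sub>E)\<close>, always choose an edge whose inverse lies in the \<open>\<partial>\<close>-closure of the dead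
  ends and entered it as early as possible. The round of entry then drops along every branch, so
  beyond a fixed depth all letters are dead ends and all remaining classes are singletons: the
  configuration is determined by its short words. If \<open>v \<notin> V(A\<^sub>D\<^sub>E)\<close>, every configuration
  can be followed forever outside the closure, and a letter outside it is not a dead end, so a
  choice path leads from it to a genuine choice. Hence genuine choices occur at every depth,
  and changing one deep choice moves the configuration arbitrarily little.

  Finally \<open>\<Omega>(E, C)\<close> is a closed subset of \<open>{0,1}\<^sup>F\<close> for the countable free group \<open>F\<close>, and a
  nonempty closed subset of \<open>{0,1}\<^sup>\<nat>\<close> without isolated points is homeomorphic to \<open>{0,1}\<^sup>\<nat>\<close>.
\<close>

abbreviation bool_product :: "('i \<Rightarrow> bool) topology" where
  "bool_product \<equiv> product_topology (\<lambda>_. discrete_topology UNIV) UNIV"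

lemma topspace_bool_product [simp]: "topspace bool_product = UNIV"
  by (simp add: PiE_UNIV_domain)

lemma openin_bool_product_iff:
  "openin bool_product U \<longleftrightarrow> (\<forall>x\<in>U. \<exists>F. finite F \<and> {y. \<forall>i\<in>F. y i = x i} \<subseteq> U)"
proof
  assume "openin bool_product U"
  show "\<forall>x\<in>U. \<exists>F. finite F \<and> {y. \<forall>i\<in>F. y i = x i} \<subseteq> U"
  proof
    fix x assume "x \<in> U"
    then obtain V where V: "finite {i. V i \<noteq> UNIV}" "x \<in> Pi\<^sub>E UNIV V" "Pi\<^sub>E UNIV V \<subseteq> U"
      using \<open>openin bool_product U\<close> by (auto simp: openin_product_topology_alt)
    have "y \<in> Pi\<^sub>E UNIV V" if "\<forall>i\<in>{i. V i \<noteq> UNIV}. y i = x i" for y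
    proof -
      have "y i \<in> V i" for i
        using that V(2) by (cases "V i = UNIV") (auto simp: PiE_iff)
      then show ?thesis by (simp add: PiE_iff)
    qed
    then have "{y. \<forall>i\<in>{i. V i \<noteq> UNIV}. y i = x i} \<subseteq> Pi\<^sub>E UNIV V" by blast
    then show "\<exists>F. finite F \<and> {y. \<forall>i\<in>F. y i = x i} \<subseteq> U"
      using V(1,3) by (intro exI[of _ "{i. V i \<noteq> UNIV}"]) blast
  qed
next
  assume H: "\<forall>x\<in>U. \<exists>F. finite F \<and> {y. \<forall>i\<in>F. y i = x i} \<subseteq> U"
  show "openin bool_product U"
    unfolding openin_product_topology_alt
  proof
    fix x assume "x \<in> U"
    then obtain F where F: "finite F" "{y. \<forall>i\<in>F. y i = x i} \<subseteq> U" using H by meson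
    define V where "V = (\<lambda>i. if i \<in> F then {x i} else UNIV)"
    have "finite {i \<in> UNIV. V i \<noteq> topspace (discrete_topology UNIV)}"
      using F(1) by (rule finite_subset[rotated]) (auto simp: V_def)
    moreover have "Pi\<^sub>E UNIV V = {y. \<forall>i\<in>F. y i = x i}"
      by (auto simp: V_def PiE_iff) (metis singletonD)+
    ultimately show "\<exists>V. finite {i \<in> UNIV. V i \<noteq> topspace (discrete_topology UNIV)} \<and>
        (\<forall>i\<in>UNIV. openin (discrete_topology UNIV) (V i)) \<and> x \<in> Pi\<^sub>E UNIV V \<and> Pi\<^sub>E UNIV V \<subseteq> U"
      using F(2) by (intro exI[of _ V]) auto
  qed
qed

lemma openin_singleton_pullback_bool_product_iff:
  fixes f :: "'a \<Rightarrow> 'i \<Rightarrow> bool"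
  shows "openin (subtopology (pullback_topology UNIV f bool_product) S) {x} \<longleftrightarrow>
     x \<in> S \<and> (\<exists>F. finite F \<and> (\<forall>y\<in>S. (\<forall>i\<in>F. f y i = f x i) \<longrightarrow> y = x))"
proof
  assume "openin (subtopology (pullback_topology UNIV f bool_product) S) {x}"
  then obtain T where T: "openin (pullback_topology UNIV f bool_product) T" "{x} = T \<inter> S"
    by (auto simp: openin_subtopology)
  then obtain U where U: "openin bool_product U" "T = f -` U \<inter> UNIV"
    by (auto simp: openin_pullback_topology)
  have "f x \<in> U" using T U by auto
  then obtain F where F: "finite F" "{y. \<forall>i\<in>F. y i = f x i} \<subseteq> U"
    using U(1) openin_bool_product_iff by blast
  have "y = x" if "y \<in> S" "\<forall>i\<in>F. f y i = f x i" for y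
    using that F(2) T(2) U(2) by auto
  then show "x \<in> S \<and> (\<exists>F. finite F \<and> (\<forall>y\<in>S. (\<forall>i\<in>F. f y i = f x i) \<longrightarrow> y = x))"
    using T(2) F(1) by auto
next
  assume "x \<in> S \<and> (\<exists>F. finite F \<and> (\<forall>y\<in>S. (\<forall>i\<in>F. f y i = f x i) \<longrightarrow> y = x))"
  then obtain F where F: "x \<in> S" "finite F" "\<forall>y\<in>S. (\<forall>i\<in>F. f y i = f x i) \<longrightarrow> y = x" by blast
  define U where "U = {z. \<forall>i\<in>F. z i = f x i}"
  have "openin bool_product U"
    unfolding openin_bool_product_iff U_def using F(2) by (intro ballI exI[of _ F]) auto
  then have "openin (pullback_topology UNIV f bool_product) (f -` U \<inter> UNIV)"
    by (auto simp: openin_pullback_topology)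
  moreover have "{x} = (f -` U \<inter> UNIV) \<inter> S" using F by (auto simp: U_def)
  ultimately show "openin (subtopology (pullback_topology UNIV f bool_product) S) {x}"
    by (auto simp: openin_subtopology)
qed

lemma openin_singleton_set_top_iff:
  "openin (subtopology set_top S) {\<xi>} \<longleftrightarrow>
     \<xi> \<in> S \<and> (\<exists>F. finite F \<and> (\<forall>\<eta>\<in>S. (\<forall>w\<in>F. w \<in> \<eta> \<longleftrightarrow> w \<in> \<xi>) \<longrightarrow> \<eta> = \<xi>))"
  unfolding set_top_def by (rule openin_singleton_pullback_bool_product_iff)

lemma openin_singleton_cantor_top_iff:
  "openin (subtopology cantor_top S) {x} \<longleftrightarrow>
     x \<in> S \<and> (\<exists>F. finite F \<and> (\<forall>y\<in>S. (\<forall>i\<in>F. y i = x i) \<longrightarrow> y = x))"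
proof -
  have "pullback_topology UNIV id cantor_top = cantor_top"
    by (simp add: topology_eq openin_pullback_topology)
  then show ?thesis
    using openin_singleton_pullback_bool_product_iff[of id S x] by (simp add: cantor_top_def)
qed

lemma topspace_set_top [simp]: "topspace set_top = UNIV"
  by (simp add: set_top_def topspace_pullback_topology)

lemma topspace_cantor_top [simp]: "topspace cantor_top = UNIV"
  by (simp add: cantor_top_def)

lemma cantor_top_no_isolated_point: "\<not> openin cantor_top {x}"
proof
  assume "openin cantor_top {x}"
  then obtain F where F: "finite F" "\<And>y. \<forall>i\<in>F. y i = x i \<Longrightarrow> y = x"
    using openin_singleton_cantor_top_iff[of UNIV x] by auto
  obtain i where i: "i \<notin> F" using F(1) infinite_UNIV_nat by (metis ex_new_if_finite)
  have "\<forall>j\<in>F. (x(i := \<not> x i)) j = x j" using i by auto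
  then have "x(i := \<not> x i) = x" by (rule F(2))
  then show False by (metis fun_upd_same)
qed

lemma homeomorphic_map_openin_singleton:
  assumes "homeomorphic_map X Y f" "openin X {a}" shows "openin Y {f a}"
  using homeomorphic_map_openness[OF assms(1) openin_subset[OF assms(2)]] assms(2) by simp

lemma continuous_map_bool_product_if_finite_dependence:
  fixes g :: "('i \<Rightarrow> bool) \<Rightarrow> 'b"
  assumes "finite F" "\<And>b b'. \<forall>j\<in>F. b j = b' j \<Longrightarrow> g b = g b'"
  shows "continuous_map bool_product (discrete_topology UNIV) g"
  unfolding continuous_map_def
proof (intro conjI allI impI)
  fix U :: "'b set"
  have "openin bool_product {x. g x \<in> U}"
    unfolding openin_bool_product_iff
  proof
    fix x assume x: "x \<in> {x. g x \<in> U}"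
    have "{y. \<forall>i\<in>F. y i = x i} \<subseteq> {x. g x \<in> U}"
    proof
      fix y assume "y \<in> {y. \<forall>i\<in>F. y i = x i}"
      then have "g y = g x" using assms(2) by simp
      then show "y \<in> {x. g x \<in> U}" using x by simp
    qed
    then show "\<exists>F. finite F \<and> {y. \<forall>i\<in>F. y i = x i} \<subseteq> {x. g x \<in> U}"
      using assms(1) by blast
  qed
  then show "openin bool_product {x \<in> topspace bool_product. g x \<in> U}" by simp
qed simp

subsection \<open>Perfect closed subsets of Cantor space\<close>

definition agree_upto :: "nat \<Rightarrow> (nat \<Rightarrow> 'a) \<Rightarrow> (nat \<Rightarrow> 'a) \<Rightarrow> bool" where
  "agree_upto n x y \<longleftrightarrow> (\<forall>i<n. x i = y i)"

lemma agree_upto_sym: "agree_upto n x y \<Longrightarrow> agree_upto n y x"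
  by (auto simp: agree_upto_def)

lemma agree_upto_trans: "agree_upto n x y \<Longrightarrow> agree_upto n y z \<Longrightarrow> agree_upto n x z"
  by (auto simp: agree_upto_def)

lemma agree_upto_mono: "agree_upto n x y \<Longrightarrow> m \<le> n \<Longrightarrow> agree_upto m x y"
  by (auto simp: agree_upto_def)

lemma first_difference:
  assumes "x \<noteq> y"
  obtains j where "agree_upto j x y" "x j \<noteq> y j"
proof
  have "\<exists>j. x j \<noteq> y j" using assms by auto
  then show "x (LEAST j. x j \<noteq> y j) \<noteq> y (LEAST j. x j \<noteq> y j)" by (rule LeastI_ex)
  show "agree_upto (LEAST j. x j \<noteq> y j) x y"
    unfolding agree_upto_def using not_less_Least by blast
qed

locale perfect_cantor_subset =
  fixes K :: "(nat \<Rightarrow> bool) set"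
  assumes nonempty: "K \<noteq> {}"
    and closed: "\<And>x. (\<And>n. \<exists>y\<in>K. agree_upto n y x) \<Longrightarrow> x \<in> K"
    and perfect: "\<And>x n. x \<in> K \<Longrightarrow> \<exists>y\<in>K. y \<noteq> x \<and> agree_upto n y x"
begin

text \<open>
  Walking down the branching levels and choosing a side according to a bit
  sequence \<open>b\<close> gives a continuous bijection \<open>embed\<close> from \<open>{0,1}\<^sup>\<nat>\<close> onto \<open>K\<close>.
\<close>

definition branches :: "(nat \<Rightarrow> bool) \<Rightarrow> nat \<Rightarrow> bool" where
  "branches y m \<longleftrightarrow> (\<exists>z1\<in>K. \<exists>z2\<in>K. agree_upto m z1 y \<and> agree_upto m z2 y \<and> z1 m \<noteq> z2 m)"

lemma branches_arbitrarily_deep: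
  assumes "y \<in> K" shows "\<exists>m\<ge>n. branches y m"
proof -
  obtain z where z: "z \<in> K" "z \<noteq> y" "agree_upto n z y" using perfect[OF assms] by blast
  obtain j where j: "agree_upto j z y" "z j \<noteq> y j" using first_difference[OF z(2)] by blast
  have "n \<le> j" using z(3) j(2) unfolding agree_upto_def by (meson not_le)
  moreover have "branches y j"
    unfolding branches_def using z(1) assms j by (auto simp: agree_upto_def)
  ultimately show ?thesis by blast
qed

definition next_branching :: "(nat \<Rightarrow> bool) \<Rightarrow> nat \<Rightarrow> nat" where
  "next_branching y n = (LEAST m. n \<le> m \<and> branches y m)"

lemma next_branching:
  assumes "y \<in> K"
  shows "n \<le> next_branching y n" "branches y (next_branching y n)"
    and "\<And>m. n \<le> m \<Longrightarrow> m < next_branching y n \<Longrightarrow> \<not> branches y m"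
proof -
  have "\<exists>m. n \<le> m \<and> branches y m" using branches_arbitrarily_deep[OF assms] by blast
  from LeastI_ex[OF this] show "n \<le> next_branching y n" "branches y (next_branching y n)"
    unfolding next_branching_def by auto
  show "\<And>m. n \<le> m \<Longrightarrow> m < next_branching y n \<Longrightarrow> \<not> branches y m"
    unfolding next_branching_def using not_less_Least by blast
qed

definition turn :: "(nat \<Rightarrow> bool) \<Rightarrow> nat \<Rightarrow> bool \<Rightarrow> (nat \<Rightarrow> bool)" where
  "turn y n b = (SOME z. z \<in> K \<and> agree_upto (next_branching y n) z y \<and> z (next_branching y n) = b)"

lemma turn:
  assumes "y \<in> K"
  shows "turn y n b \<in> K" "agree_upto (next_branching y n) (turn y n b) y"
    and "turn y n b (next_branching y n) = b"
proof -
  let ?m = "next_branching y n"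
  obtain z1 z2 where "z1 \<in> K" "z2 \<in> K" "agree_upto ?m z1 y" "agree_upto ?m z2 y" "z1 ?m \<noteq> z2 ?m"
    using next_branching(2)[OF assms] unfolding branches_def by blast
  then have "\<exists>z. z \<in> K \<and> agree_upto ?m z y \<and> z ?m = b" by (cases "z1 ?m = b") auto
  then have "turn y n b \<in> K \<and> agree_upto ?m (turn y n b) y \<and> turn y n b ?m = b"
    unfolding turn_def by (rule someI_ex)
  then show "turn y n b \<in> K" "agree_upto ?m (turn y n b) y" "turn y n b ?m = b" by auto
qed

text \<open>The \<open>k\<close>-th approximation: a point of \<open>K\<close> and the level up to which it is already final.\<close>

fun approx :: "(nat \<Rightarrow> bool) \<Rightarrow> nat \<Rightarrow> (nat \<Rightarrow> bool) \<times> nat" where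
  "approx b 0 = (SOME y. y \<in> K, 0)"
| "approx b (Suc k) = (turn (fst (approx b k)) (snd (approx b k)) (b k),
     Suc (next_branching (fst (approx b k)) (snd (approx b k))))"

lemma approx_in_K: "fst (approx b k) \<in> K"
  using nonempty by (induction k) (auto simp: some_in_eq turn)

lemma approx_level_mono: "snd (approx b k) < snd (approx b (Suc k))"
  using next_branching(1)[OF approx_in_K] by (simp add: less_Suc_eq_le)

lemma approx_level_ge: "k \<le> snd (approx b k)"
proof (induction k)
  case (Suc k) then show ?case using approx_level_mono[of b k] by linarith
qed simp

lemma approx_agree_Suc: "agree_upto (snd (approx b k)) (fst (approx b (Suc k))) (fst (approx b k))"
  using agree_upto_mono[OF turn(2)[OF approx_in_K] next_branching(1)[OF approx_in_K]] by simp

lemma approx_agree: "agree_upto (snd (approx b k)) (fst (approx b (k + j))) (fst (approx b k))"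
proof (induction j)
  case 0 then show ?case by (simp add: agree_upto_def)
next
  case (Suc j)
  have "snd (approx b k) \<le> snd (approx b (k + j))"
  proof (induction j)
    case (Suc j)
    then show ?case using approx_level_mono[of b "k + j"] by (metis add_Suc_right less_imp_le order.strict_trans1)
  qed simp
  then show ?case
    using Suc approx_agree_Suc[of b "k + j"] agree_upto_mono agree_upto_trans by simp blast
qed

lemma approx_prefix: "\<forall>j<k. b j = b' j \<Longrightarrow> approx b k = approx b' k"
  by (induction k) auto

definition embed :: "(nat \<Rightarrow> bool) \<Rightarrow> (nat \<Rightarrow> bool)" where
  "embed b i = fst (approx b (Suc i)) i"

lemma embed_agree: "agree_upto (snd (approx b k)) (embed b) (fst (approx b k))"
  unfolding agree_upto_def
proof (intro allI impI)
  fix i assume i: "i < snd (approx b k)"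
  show "embed b i = fst (approx b k) i"
  proof (cases "Suc i \<le> k")
    case True
    then obtain j where "k = Suc i + j" by (metis le_add_diff_inverse)
    moreover have "i < snd (approx b (Suc i))" using approx_level_ge[of "Suc i" b] by simp
    ultimately show ?thesis using approx_agree[of b "Suc i" j] unfolding embed_def agree_upto_def by simp
  next
    case False
    then obtain j where "Suc i = k + j" by (metis le_add_diff_inverse nat_le_linear)
    then show ?thesis using approx_agree[of b k j] i unfolding embed_def agree_upto_def by simp
  qed
qed

lemma embed_in_K: "embed b \<in> K"
proof (rule closed)
  fix n
  have "agree_upto n (fst (approx b n)) (embed b)"
    using agree_upto_sym[OF agree_upto_mono[OF embed_agree approx_level_ge]] .
  then show "\<exists>y\<in>K. agree_upto n y (embed b)" using approx_in_K by blast
qed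

lemma embed_at_branching:
  "embed b (next_branching (fst (approx b k)) (snd (approx b k))) = b k"
  using embed_agree[of b "Suc k"] turn(3)[OF approx_in_K] unfolding agree_upto_def by simp

lemma inj_embed: "inj embed"
proof
  fix b b' assume eq: "embed b = embed b'"
  show "b = b'"
  proof (rule ccontr)
    assume "b \<noteq> b'"
    then obtain k where k: "agree_upto k b b'" "b k \<noteq> b' k" using first_difference by blast
    have "approx b k = approx b' k" using approx_prefix k(1) unfolding agree_upto_def by blast
    then show False using embed_at_branching[of b k] embed_at_branching[of b' k] eq k(2) by simp
  qed
qed

text \<open>To hit \<open>x \<in> K\<close>, read off the bits of \<open>x\<close> at the branching levels met along the way.\<close>

fun approx_towards :: "(nat \<Rightarrow> bool) \<Rightarrow> nat \<Rightarrow> (nat \<Rightarrow> bool) \<times> nat" where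
  "approx_towards x 0 = (SOME y. y \<in> K, 0)"
| "approx_towards x (Suc k) =
    (let y = fst (approx_towards x k); n = snd (approx_towards x k)
     in (turn y n (x (next_branching y n)), Suc (next_branching y n)))"

lemma agree_upto_next_branching:
  assumes "y \<in> K" "x \<in> K" "agree_upto n y x"
  shows "agree_upto (next_branching y n) y x"
proof (rule ccontr)
  assume nagree: "\<not> agree_upto (next_branching y n) y x"
  then have "y \<noteq> x" by (auto simp: agree_upto_def)
  then obtain j where j: "agree_upto j y x" "y j \<noteq> x j" using first_difference by blast
  have "j < next_branching y n"
  proof (rule ccontr)
    assume "\<not> j < next_branching y n"
    then show False using nagree agree_upto_mono[OF j(1)] by (simp add: not_less)
  qed
  moreover have "n \<le> j" using assms(3) j(2) unfolding agree_upto_def by (meson not_le)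
  moreover have "branches y j"
    unfolding branches_def using assms(1,2) j by (auto simp: agree_upto_def)
  ultimately show False using next_branching(3)[OF assms(1)] by blast
qed

lemma embed_surj:
  assumes x: "x \<in> K" shows "\<exists>b. embed b = x"
proof -
  define b where "b k = x (next_branching (fst (approx_towards x k)) (snd (approx_towards x k)))" for k
  have approx_eq: "approx b k = approx_towards x k" for k
    by (induction k) (simp_all add: b_def Let_def)
  have towards: "agree_upto (snd (approx_towards x k)) (fst (approx_towards x k)) x" for k
  proof (induction k)
    case 0 then show ?case by (simp add: agree_upto_def)
  next
    case (Suc k)
    define y n where "y = fst (approx_towards x k)" and "n = snd (approx_towards x k)"
    have yK: "y \<in> K" using approx_in_K[of b k] approx_eq by (simp add: y_def)
    have "agree_upto (next_branching y n) y x"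
      using agree_upto_next_branching[OF yK x] Suc by (simp add: y_def n_def)
    then have "agree_upto (Suc (next_branching y n)) (turn y n (x (next_branching y n))) x"
      using turn[OF yK, of n "x (next_branching y n)"] unfolding agree_upto_def by (metis less_Suc_eq)
    then show ?case by (simp add: y_def n_def Let_def)
  qed
  have "embed b i = x i" for i
  proof -
    have "agree_upto (snd (approx b (Suc i))) (embed b) x"
      using agree_upto_trans[OF embed_agree[of b "Suc i"] towards[of "Suc i", folded approx_eq]] .
    then show ?thesis using approx_level_ge[of "Suc i" b] unfolding agree_upto_def by simp
  qed
  then show ?thesis by blast
qed

lemma continuous_map_embed: "continuous_map cantor_top cantor_top embed"
  unfolding cantor_top_def continuous_map_componentwise_UNIV
proof
  fix i
  have dep: "embed b i = embed b' i" if "\<forall>j\<in>{..i}. b j = b' j" for b b'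
    using approx_prefix[of "Suc i" b b'] that unfolding embed_def by simp
  show "continuous_map bool_product (discrete_topology UNIV) (\<lambda>x. embed x i)"
    by (rule continuous_map_bool_product_if_finite_dependence[of "{..i}"]) (use dep in auto)
qed

theorem homeomorphic_cantor_top: "subtopology cantor_top K homeomorphic_space cantor_top"
proof -
  have "homeomorphic_map cantor_top (subtopology cantor_top K) embed"
  proof (rule continuous_imp_homeomorphic_map)
    show "continuous_map cantor_top (subtopology cantor_top K) embed"
      using continuous_map_embed embed_in_K by (simp add: continuous_map_in_subtopology)
    show "compact_space cantor_top" unfolding cantor_top_def
      by (simp add: compact_space_product_topology compact_space_discrete_topology)
    show "Hausdorff_space (subtopology cantor_top K)" unfolding cantor_top_def
      by (simp add: Hausdorff_space_subtopology Hausdorff_space_product_topology)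
    show "embed ` topspace cantor_top = topspace (subtopology cantor_top K)"
      using embed_in_K embed_surj by (auto simp: image_iff) (metis)
    show "inj_on embed (topspace cantor_top)" using inj_embed by simp
  qed
  then show ?thesis using homeomorphic_space homeomorphic_space_sym by blast
qed

end

lemma letters_iff [simp]: "Pos e \<in> letters E1 \<longleftrightarrow> e \<in> E1" "Neg e \<in> letters E1 \<longleftrightarrow> e \<in> E1"
  by (auto simp: letters_def)

lemma finite_letters: "finite E1 \<Longrightarrow> finite (letters E1)"
  by (simp add: letters_def)

lemma linv_in_letters: "\<tau> \<in> letters E1 \<Longrightarrow> linv \<tau> \<in> letters E1"
  by (cases \<tau>) auto

lemma reduced_Nil [simp]: "reduced E1 []"
  by (simp add: reduced_def)

lemma all_adjacent_Cons:
  "(\<forall>i. Suc i < length (a # w) \<longrightarrow> P ((a # w) ! i) ((a # w) ! Suc i)) \<longleftrightarrow>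
   (w \<noteq> [] \<longrightarrow> P a (hd w)) \<and> (\<forall>i. Suc i < length w \<longrightarrow> P (w ! i) (w ! Suc i))"
proof (cases w)
  case (Cons b u)
  have "(\<forall>i. Suc i < length (a # w) \<longrightarrow> P ((a # w) ! i) ((a # w) ! Suc i)) \<longleftrightarrow>
        (\<forall>i<Suc (length u). P ((a # w) ! i) ((a # w) ! Suc i))"
    using Cons by auto
  also have "\<dots> \<longleftrightarrow> P a b \<and> (\<forall>i<length u. P (w ! i) (w ! Suc i))"
    unfolding All_less_Suc2 using Cons by simp
  finally show ?thesis using Cons by auto
qed simp

lemma reduced_Cons:
  "reduced E1 (a # w) \<longleftrightarrow> a \<in> letters E1 \<and> reduced E1 w \<and> (w \<noteq> [] \<longrightarrow> hd w \<noteq> linv a)"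
  unfolding reduced_def all_adjacent_Cons[where P = "\<lambda>x y. y \<noteq> linv x"] by auto

lemma reduced_replicate: "e \<in> E1 \<Longrightarrow> reduced E1 (replicate n (Pos e))"
  by (induction n) (auto simp: reduced_Cons)

lemma gmult_Nil: "gmult \<sigma> [] = [\<sigma>]"
  by (simp add: gmult_def)

lemma gmult_Cons: "\<alpha> = [] \<or> hd \<alpha> \<noteq> linv \<sigma> \<Longrightarrow> gmult \<sigma> \<alpha> = \<sigma> # \<alpha>"
  by (cases \<alpha>) (auto simp: gmult_def)

lemma gmult_linv: "gmult (linv \<tau>) (\<tau> # \<beta>) = \<beta>"
  by (cases \<tau>) (auto simp: gmult_def)

lemma mem_xi_at_iff: "\<sigma> \<in> xi_at E1 \<xi> \<alpha> \<longleftrightarrow> \<sigma> \<in> letters E1 \<and> gmult \<sigma> \<alpha> \<in> \<xi>"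
  by (simp add: xi_at_def)

lemma Cons_mem_if_mem_xi_at: "\<sigma> \<in> xi_at E1 \<xi> \<alpha> \<Longrightarrow> \<alpha> = [] \<or> hd \<alpha> \<noteq> linv \<sigma> \<Longrightarrow> \<sigma> # \<alpha> \<in> \<xi>"
  using gmult_Cons[of \<alpha> \<sigma>] by (simp add: mem_xi_at_iff)

lemma two_le_card: "finite S \<Longrightarrow> a \<in> S \<Longrightarrow> b \<in> S \<Longrightarrow> a \<noteq> b \<Longrightarrow> 2 \<le> card S"
  using card_mono[of S "{a, b}"] by auto

lemma ex_other_if_two_le_card:
  assumes "2 \<le> card X" "a \<in> X" shows "\<exists>b\<in>X. b \<noteq> a"
proof (rule ccontr)
  assume "\<not> (\<exists>b\<in>X. b \<noteq> a)"
  then have "X \<subseteq> {a}" by blast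
  then have "card X \<le> 1" using card_mono[of "{a}" X] by simp
  then show False using assms(1) by simp
qed

locale bipartite_separated_graph =
  fixes E00 E01 :: "'v set" and E1 :: "'e set" and r s :: "'e \<Rightarrow> 'v" and C :: "'e set set"
  assumes graph: "fin_bip_sep_graph E00 E01 E1 r s C"
begin

lemma finite_E1: "finite E1"
  and E00_E01_disjoint: "E00 \<inter> E01 = {}"
  and image_s: "s ` E1 = E01"
  and image_r: "r ` E1 = E00"
  and class_nonempty: "X \<in> C \<Longrightarrow> X \<noteq> {}"
  and class_subset: "X \<in> C \<Longrightarrow> X \<subseteq> E1"
  and class_same_range: "X \<in> C \<Longrightarrow> e \<in> X \<Longrightarrow> f \<in> X \<Longrightarrow> r e = r f"
  and class_ex1: "e \<in> E1 \<Longrightarrow> \<exists>!X. X \<in> C \<and> e \<in> X"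
  using graph unfolding fin_bip_sep_graph_def by blast+

lemma s_in_E01: "e \<in> E1 \<Longrightarrow> s e \<in> E01"
  using image_s imageI by metis

lemma r_in_E00: "e \<in> E1 \<Longrightarrow> r e \<in> E00"
  using image_r imageI by metis

lemma r_ne_s: "e \<in> E1 \<Longrightarrow> f \<in> E1 \<Longrightarrow> r e \<noteq> s f"
  using s_in_E01[of f] r_in_E00[of e] E00_E01_disjoint by (metis IntI empty_iff)

lemma cls_in_C: "e \<in> E1 \<Longrightarrow> cls C e \<in> C"
  and mem_cls: "e \<in> E1 \<Longrightarrow> e \<in> cls C e"
  unfolding cls_def using theI'[OF class_ex1] by simp_all

lemma cls_eq: "X \<in> C \<Longrightarrow> e \<in> X \<Longrightarrow> cls C e = X"
  unfolding cls_def using class_subset the1_equality[OF class_ex1] by blast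

lemma class_unique: "X \<in> C \<Longrightarrow> X' \<in> C \<Longrightarrow> e \<in> X \<Longrightarrow> e \<in> X' \<Longrightarrow> X = X'"
  using cls_eq by metis

lemma Cv_in_C: "X \<in> Cv r C v \<Longrightarrow> X \<in> C"
  by (simp add: Cv_def)

lemma Cv_memD: "X \<in> Cv r C v \<Longrightarrow> e \<in> X \<Longrightarrow> r e = v \<and> e \<in> E1"
  using class_subset by (auto simp: Cv_def)

lemma cls_in_Cv:
  assumes "e \<in> E1" shows "cls C e \<in> Cv r C (r e)"
proof -
  have "\<forall>f\<in>cls C e. r f = r e"
    using class_same_range[OF cls_in_C[OF assms] _ mem_cls[OF assms]] by blast
  then show ?thesis using cls_in_C[OF assms] by (simp add: Cv_def)
qed

lemma finite_C: "finite C"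
  using class_subset finite_E1 by (metis Pow_iff finite_Pow_iff finite_subset subsetI)

lemma finite_Cv: "finite (Cv r C v)"
  using finite_C by (simp add: Cv_def)

lemma finite_class: "X \<in> C \<Longrightarrow> finite X"
  using class_subset finite_E1 finite_subset by blast

lemma class_card_less_2_eq: "X \<in> C \<Longrightarrow> \<not> 2 \<le> card X \<Longrightarrow> a \<in> X \<Longrightarrow> b \<in> X \<Longrightarrow> a = b"
  by (metis two_le_card finite_class)

subsection \<open>Configurations as choice trees\<close>

text \<open>
  A choice function picks an edge \<open>ch \<alpha> Y\<close> of each class \<open>Y\<close>, possibly depending on the word
  \<open>\<alpha>\<close> at which the choice is made.
\<close>

definition choice_fun :: "('e letter list \<Rightarrow> 'e set \<Rightarrow> 'e) \<Rightarrow> bool" where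
  "choice_fun ch \<longleftrightarrow> (\<forall>\<alpha> Y. Y \<in> C \<longrightarrow> ch \<alpha> Y \<in> Y)"

lemma choice_funD: "choice_fun ch \<Longrightarrow> Y \<in> C \<Longrightarrow> ch \<alpha> Y \<in> Y"
  by (simp add: choice_fun_def)

inductive_set config :: "'v \<Rightarrow> ('e letter list \<Rightarrow> 'e set \<Rightarrow> 'e) \<Rightarrow> 'e letter list set"
  for v ch where
  config_Nil: "[] \<in> config v ch"
| config_root_source: "v \<in> E01 \<Longrightarrow> f \<in> E1 \<Longrightarrow> s f = v \<Longrightarrow> [Pos f] \<in> config v ch"
| config_root_range: "v \<notin> E01 \<Longrightarrow> X \<in> Cv r C v \<Longrightarrow> [Neg (ch [] X)] \<in> config v ch"
| config_Neg: "Neg e # \<beta> \<in> config v ch \<Longrightarrow> f \<in> E1 \<Longrightarrow> s f = s e \<Longrightarrow> f \<noteq> e \<Longrightarrow>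
    Pos f # Neg e # \<beta> \<in> config v ch"
| config_Pos: "Pos e # \<beta> \<in> config v ch \<Longrightarrow> Y \<in> Cv r C (r e) \<Longrightarrow> Y \<noteq> cls C e \<Longrightarrow>
    Neg (ch (Pos e # \<beta>) Y) # Pos e # \<beta> \<in> config v ch"

lemma reduced_config:
  assumes "w \<in> config v ch" "choice_fun ch" shows "reduced E1 w"
  using assms(1)
proof (induction w rule: config.induct)
  case (config_root_range X)
  then show ?case using choice_funD[OF assms(2)] Cv_in_C Cv_memD by (simp add: reduced_Cons)
next
  case (config_Pos e \<beta> Y)
  have "ch (Pos e # \<beta>) Y \<in> Y" using choice_funD[OF assms(2) Cv_in_C[OF config_Pos.hyps(2)]] .
  moreover from this have "ch (Pos e # \<beta>) Y \<noteq> e"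
    using config_Pos.hyps(2,3) cls_eq Cv_in_C by metis
  ultimately show ?case using config_Pos Cv_memD by (simp add: reduced_Cons)
qed (simp_all add: reduced_Cons)

lemma config_tl: "w \<in> config v ch \<Longrightarrow> tl w \<in> config v ch"
  by (erule config.cases) (simp_all add: config.config_Nil)

lemma config_drop: "w \<in> config v ch \<Longrightarrow> drop k w \<in> config v ch"
  by (induction k arbitrary: w) (simp_all add: drop_Suc config_tl)

lemma config_singleton_iff: "[\<sigma>] \<in> config v ch \<longleftrightarrow>
   (v \<in> E01 \<and> (\<exists>f\<in>E1. s f = v \<and> \<sigma> = Pos f)) \<or> (v \<notin> E01 \<and> (\<exists>X\<in>Cv r C v. \<sigma> = Neg (ch [] X)))"
proof
  assume "[\<sigma>] \<in> config v ch"
  then show "(v \<in> E01 \<and> (\<exists>f\<in>E1. s f = v \<and> \<sigma> = Pos f)) \<or> (v \<notin> E01 \<and> (\<exists>X\<in>Cv r C v. \<sigma> = Neg (ch [] X)))"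
    by (cases rule: config.cases) auto
qed (auto intro: config.intros)

lemma config_Cons_Pos_iff: "\<sigma> # Pos e # \<beta> \<in> config v ch \<longleftrightarrow>
   Pos e # \<beta> \<in> config v ch \<and> (\<exists>Y\<in>Cv r C (r e). Y \<noteq> cls C e \<and> \<sigma> = Neg (ch (Pos e # \<beta>) Y))"
proof
  assume "\<sigma> # Pos e # \<beta> \<in> config v ch"
  then show "Pos e # \<beta> \<in> config v ch \<and> (\<exists>Y\<in>Cv r C (r e). Y \<noteq> cls C e \<and> \<sigma> = Neg (ch (Pos e # \<beta>) Y))"
    by (cases rule: config.cases) auto
qed (auto intro: config.intros)

lemma config_Cons_Neg_iff: "\<sigma> # Neg e # \<beta> \<in> config v ch \<longleftrightarrow>
   Neg e # \<beta> \<in> config v ch \<and> (\<exists>f\<in>E1. s f = s e \<and> f \<noteq> e \<and> \<sigma> = Pos f)"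
proof
  assume "\<sigma> # Neg e # \<beta> \<in> config v ch"
  then show "Neg e # \<beta> \<in> config v ch \<and> (\<exists>f\<in>E1. s f = s e \<and> f \<noteq> e \<and> \<sigma> = Pos f)"
    by (cases rule: config.cases) auto
qed (auto intro: config.intros)

lemma xi_at_config_Nil_source:
  "v \<in> E01 \<Longrightarrow> xi_at E1 (config v ch) [] = Pos ` {f\<in>E1. s f = v}"
  unfolding set_eq_iff mem_xi_at_iff gmult_Nil config_singleton_iff by auto

lemma xi_at_config_Nil_range:
  assumes "choice_fun ch" "v \<notin> E01"
  shows "xi_at E1 (config v ch) [] = {Neg (ch [] X) |X. X \<in> Cv r C v}"
proof -
  have "X \<in> Cv r C v \<Longrightarrow> ch [] X \<in> E1" for X
    using choice_funD[OF assms(1) Cv_in_C] Cv_memD by blast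
  then show ?thesis
    unfolding set_eq_iff mem_xi_at_iff gmult_Nil config_singleton_iff using assms(2) by auto
qed

lemma xi_at_config_Neg:
  assumes "choice_fun ch" "Neg e # \<beta> \<in> config v ch"
  shows "xi_at E1 (config v ch) (Neg e # \<beta>) = Pos ` {f\<in>E1. s f = s e}"
proof (rule set_eqI)
  fix \<sigma>
  have "e \<in> E1" using reduced_config[OF assms(2,1)] by (simp add: reduced_Cons)
  moreover have "\<beta> \<in> config v ch" using config_tl[OF assms(2)] by simp
  moreover have "\<sigma> \<noteq> Pos e \<Longrightarrow> gmult \<sigma> (Neg e # \<beta>) = \<sigma> # Neg e # \<beta>"
    by (cases \<sigma>) (auto simp: gmult_def)
  ultimately show "\<sigma> \<in> xi_at E1 (config v ch) (Neg e # \<beta>) \<longleftrightarrow> \<sigma> \<in> Pos ` {f\<in>E1. s f = s e}"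
    using assms(2) by (cases \<sigma>) (auto simp: mem_xi_at_iff gmult_def config_Cons_Neg_iff)
qed

text \<open>After \<open>e\<close> the class \<open>X\<^sub>e\<close> itself is represented by the way back, \<open>e\<^sup>-\<^sup>1\<close>.\<close>

lemma xi_at_config_Pos:
  assumes ch: "choice_fun ch" and "Pos e # \<beta> \<in> config v ch"
  shows "xi_at E1 (config v ch) (Pos e # \<beta>) =
     {Neg (if X = cls C e then e else ch (Pos e # \<beta>) X) |X. X \<in> Cv r C (r e)}"
proof (rule set_eqI)
  fix \<sigma>
  have e: "e \<in> E1" using reduced_config[OF assms(2) ch] by (simp add: reduced_Cons)
  have \<beta>: "\<beta> \<in> config v ch" using config_tl[OF assms(2)] by simp
  have ch_in: "Y \<in> Cv r C (r e) \<Longrightarrow> ch (Pos e # \<beta>) Y \<in> Y" for Y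
    using choice_funD[OF ch Cv_in_C] by blast
  show "\<sigma> \<in> xi_at E1 (config v ch) (Pos e # \<beta>) \<longleftrightarrow>
     \<sigma> \<in> {Neg (if X = cls C e then e else ch (Pos e # \<beta>) X) |X. X \<in> Cv r C (r e)}"
  proof (cases "\<sigma> = Neg e")
    case True
    then show ?thesis
      using e \<beta> cls_in_Cv[OF e] by (force simp: mem_xi_at_iff gmult_def)
  next
    case False
    then have "gmult \<sigma> (Pos e # \<beta>) = \<sigma> # Pos e # \<beta>" by (cases \<sigma>) (auto simp: gmult_def)
    moreover have "Neg (ch (Pos e # \<beta>) Y) \<in> letters E1" if "Y \<in> Cv r C (r e)" for Y
      using ch_in[OF that] Cv_memD[OF that] by simp
    ultimately show ?thesis
      using False assms(2) by (auto simp: mem_xi_at_iff config_Cons_Pos_iff)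
  qed
qed

lemma config_in_Omega:
  assumes ch: "choice_fun ch" and v: "v \<in> E00 \<union> E01"
  shows "config v ch \<in> Omega E00 E01 E1 r s C"
  unfolding Omega_def
proof (intro CollectI conjI ballI allI)
  show "config v ch \<subseteq> Fgrp E1" using reduced_config[OF _ ch] unfolding Fgrp_def by blast
  show "[] \<in> config v ch" by (rule config_Nil)
  show "\<alpha> \<in> config v ch \<Longrightarrow> drop k \<alpha> \<in> config v ch" for \<alpha> k by (rule config_drop)
next
  fix \<alpha> assume \<alpha>: "\<alpha> \<in> config v ch"
  show "(\<exists>u\<in>E01. xi_at E1 (config v ch) \<alpha> = Pos ` {e \<in> E1. s e = u}) \<or>
        (\<exists>u\<in>E00. \<exists>f. (\<forall>X\<in>Cv r C u. f X \<in> X) \<and>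
           xi_at E1 (config v ch) \<alpha> = {Neg (f X) |X. X \<in> Cv r C u})"
  proof (cases \<alpha>)
    case Nil
    show ?thesis
    proof (cases "v \<in> E01")
      case True
      then show ?thesis using xi_at_config_Nil_source Nil by (intro disjI1 bexI[of _ v]) simp_all
    next
      case False
      then have "v \<in> E00" using v by blast
      then show ?thesis
        using xi_at_config_Nil_range[OF ch False] choice_funD[OF ch Cv_in_C] Nil
        by (intro disjI2 bexI[of _ v] exI[of _ "ch []"]) simp_all
    qed
  next
    case (Cons \<tau> \<beta>)
    then have \<tau>\<beta>: "\<tau> # \<beta> \<in> config v ch" using \<alpha> by simp
    show ?thesis
    proof (cases \<tau>)
      case (Pos e)
      have e: "e \<in> E1" using reduced_config[OF \<tau>\<beta> ch] Pos by (simp add: reduced_Cons)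
      define f where "f X = (if X = cls C e then e else ch (Pos e # \<beta>) X)" for X
      have "\<forall>X\<in>Cv r C (r e). f X \<in> X"
        using mem_cls[OF e] choice_funD[OF ch Cv_in_C] by (auto simp: f_def)
      then show ?thesis
        using xi_at_config_Pos[OF ch] \<tau>\<beta> r_in_E00[OF e] Cons Pos unfolding f_def
        by (intro disjI2 bexI[of _ "r e"] exI[of _ f]) (simp_all add: f_def)
    next
      case (Neg e)
      have "e \<in> E1" using reduced_config[OF \<tau>\<beta> ch] Neg by (simp add: reduced_Cons)
      then show ?thesis using xi_at_config_Neg[OF ch] \<tau>\<beta> s_in_E01 Cons Neg
        by (intro disjI1 bexI[of _ "s e"]) simp_all
    qed
  qed
qed

lemma mem_Omega_v_iff: "\<xi> \<in> Omega_v E00 E01 E1 r s C v \<longleftrightarrow> \<xi> \<in> Omega E00 E01 E1 r s C \<and>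
   (if v \<in> E01 then \<exists>e\<in>E1. s e = v \<and> [Pos e] \<in> \<xi> else \<exists>X\<in>Cv r C v. \<exists>e\<in>X. [Neg e] \<in> \<xi>)"
  unfolding Omega_v_def by auto

lemma config_in_Omega_v:
  assumes ch: "choice_fun ch" and v: "v \<in> E00 \<union> E01"
  shows "config v ch \<in> Omega_v E00 E01 E1 r s C v"
proof (cases "v \<in> E01")
  case True
  then obtain f where "f \<in> E1" "s f = v" using image_s by blast
  then show ?thesis
    using config_in_Omega[OF assms] config_root_source True unfolding mem_Omega_v_iff by auto
next
  case False
  then obtain e where "e \<in> E1" "r e = v" using v image_r by blast
  then have X: "cls C e \<in> Cv r C v" using cls_in_Cv by blast
  then have "[Neg (ch [] (cls C e))] \<in> config v ch" "ch [] (cls C e) \<in> cls C e"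
    using config_root_range[OF False] choice_funD[OF ch Cv_in_C] by blast+
  then show ?thesis
    using config_in_Omega[OF assms] False X unfolding mem_Omega_v_iff by auto
qed

abbreviation "\<Omega> \<equiv> Omega E00 E01 E1 r s C"
abbreviation "\<Omega>\<^sub>v v \<equiv> Omega_v E00 E01 E1 r s C v"

lemma Omega_reduced: "\<xi> \<in> \<Omega> \<Longrightarrow> \<alpha> \<in> \<xi> \<Longrightarrow> reduced E1 \<alpha>"
  and Omega_Nil: "\<xi> \<in> \<Omega> \<Longrightarrow> [] \<in> \<xi>"
  and Omega_drop: "\<xi> \<in> \<Omega> \<Longrightarrow> \<alpha> \<in> \<xi> \<Longrightarrow> drop k \<alpha> \<in> \<xi>"
  and Omega_local: "\<xi> \<in> \<Omega> \<Longrightarrow> \<alpha> \<in> \<xi> \<Longrightarrow>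
     (\<exists>u\<in>E01. xi_at E1 \<xi> \<alpha> = Pos ` {e \<in> E1. s e = u}) \<or>
     (\<exists>u\<in>E00. \<exists>f. (\<forall>X\<in>Cv r C u. f X \<in> X) \<and> xi_at E1 \<xi> \<alpha> = {Neg (f X) |X. X \<in> Cv r C u})"
  unfolding Omega_def Fgrp_def by blast+

lemma Omega_tl: "\<xi> \<in> \<Omega> \<Longrightarrow> \<alpha> \<in> \<xi> \<Longrightarrow> tl \<alpha> \<in> \<xi>"
  using Omega_drop[of \<xi> \<alpha> 1] by (simp add: drop_Suc)

lemma Omega_subset_Fgrp: "\<xi> \<in> \<Omega> \<Longrightarrow> \<xi> \<subseteq> Fgrp E1"
  unfolding Omega_def by blast

lemma mem_xi_at_if_Cons_mem:
  assumes "\<xi> \<in> \<Omega>" "\<sigma> # \<alpha> \<in> \<xi>" shows "\<sigma> \<in> xi_at E1 \<xi> \<alpha>"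
proof -
  have "\<sigma> \<in> letters E1" "\<alpha> = [] \<or> hd \<alpha> \<noteq> linv \<sigma>"
    using Omega_reduced[OF assms] by (auto simp: reduced_Cons)
  then show ?thesis using gmult_Cons[of \<alpha> \<sigma>] assms(2) by (simp add: mem_xi_at_iff)
qed

lemma linv_mem_xi_at:
  assumes "\<xi> \<in> \<Omega>" "\<tau> # \<beta> \<in> \<xi>" shows "linv \<tau> \<in> xi_at E1 \<xi> (\<tau> # \<beta>)"
proof -
  have "\<tau> \<in> letters E1" using Omega_reduced[OF assms] by (simp add: reduced_Cons)
  moreover have "\<beta> \<in> \<xi>" using Omega_tl[OF assms] by simp
  ultimately show ?thesis by (simp add: mem_xi_at_iff gmult_linv linv_in_letters)
qed

text \<open>The local condition at a word is determined by its last letter: the way back pins down the vertex.\<close>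

lemma xi_at_Pos:
  assumes "\<xi> \<in> \<Omega>" "Pos e # \<beta> \<in> \<xi>"
  obtains f where "\<forall>X\<in>Cv r C (r e). f X \<in> X"
    "xi_at E1 \<xi> (Pos e # \<beta>) = {Neg (f X) |X. X \<in> Cv r C (r e)}"
proof -
  have inv: "Neg e \<in> xi_at E1 \<xi> (Pos e # \<beta>)" using linv_mem_xi_at[OF assms] by simp
  from Omega_local[OF assms] show ?thesis
  proof
    assume "\<exists>u\<in>E01. xi_at E1 \<xi> (Pos e # \<beta>) = Pos ` {e \<in> E1. s e = u}"
    then show ?thesis using inv by auto
  next
    assume "\<exists>u\<in>E00. \<exists>f. (\<forall>X\<in>Cv r C u. f X \<in> X) \<and> xi_at E1 \<xi> (Pos e # \<beta>) = {Neg (f X) |X. X \<in> Cv r C u}"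
    then obtain u f where f: "\<forall>X\<in>Cv r C u. f X \<in> X"
      "xi_at E1 \<xi> (Pos e # \<beta>) = {Neg (f X) |X. X \<in> Cv r C u}"
      by blast
    then obtain X where "X \<in> Cv r C u" "e = f X" using inv by auto
    then have "r e = u" using f(1) Cv_memD by metis
    then show ?thesis using f that by blast
  qed
qed

lemma xi_at_Neg:
  assumes "\<xi> \<in> \<Omega>" "Neg e # \<beta> \<in> \<xi>"
  shows "xi_at E1 \<xi> (Neg e # \<beta>) = Pos ` {f \<in> E1. s f = s e}"
proof -
  have inv: "Pos e \<in> xi_at E1 \<xi> (Neg e # \<beta>)" using linv_mem_xi_at[OF assms] by simp
  from Omega_local[OF assms] show ?thesis
  proof
    assume "\<exists>u\<in>E01. xi_at E1 \<xi> (Neg e # \<beta>) = Pos ` {e \<in> E1. s e = u}"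
    then obtain u where u: "xi_at E1 \<xi> (Neg e # \<beta>) = Pos ` {e \<in> E1. s e = u}" by blast
    then have "s e = u" using inv by auto
    then show ?thesis using u by simp
  next
    assume "\<exists>u\<in>E00. \<exists>f. (\<forall>X\<in>Cv r C u. f X \<in> X) \<and> xi_at E1 \<xi> (Neg e # \<beta>) = {Neg (f X) |X. X \<in> Cv r C u}"
    then show ?thesis using inv by auto
  qed
qed

lemma xi_at_root_source:
  assumes "\<xi> \<in> \<Omega>\<^sub>v v" "v \<in> E01"
  shows "xi_at E1 \<xi> [] = Pos ` {f \<in> E1. s f = v}"
proof -
  have \<xi>: "\<xi> \<in> \<Omega>" using assms unfolding mem_Omega_v_iff by blast
  obtain e where e: "e \<in> E1" "s e = v" "[Pos e] \<in> \<xi>" using assms unfolding mem_Omega_v_iff by auto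
  have P: "Pos e \<in> xi_at E1 \<xi> []" using mem_xi_at_if_Cons_mem[OF \<xi> e(3)] .
  from Omega_local[OF \<xi> Omega_Nil[OF \<xi>]] show ?thesis
  proof
    assume "\<exists>u\<in>E01. xi_at E1 \<xi> [] = Pos ` {e \<in> E1. s e = u}"
    then obtain u where u: "xi_at E1 \<xi> [] = Pos ` {e \<in> E1. s e = u}" by blast
    then have "u = v" using P e(2) by auto
    then show ?thesis using u by simp
  next
    assume "\<exists>u\<in>E00. \<exists>f. (\<forall>X\<in>Cv r C u. f X \<in> X) \<and> xi_at E1 \<xi> [] = {Neg (f X) |X. X \<in> Cv r C u}"
    then show ?thesis using P by auto
  qed
qed

lemma xi_at_root_range:
  assumes "\<xi> \<in> \<Omega>\<^sub>v v" "v \<notin> E01"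
  obtains f where "\<forall>X\<in>Cv r C v. f X \<in> X" "xi_at E1 \<xi> [] = {Neg (f X) |X. X \<in> Cv r C v}"
proof -
  have \<xi>: "\<xi> \<in> \<Omega>" using assms unfolding mem_Omega_v_iff by blast
  obtain X e where e: "X \<in> Cv r C v" "e \<in> X" "[Neg e] \<in> \<xi>"
    using assms unfolding mem_Omega_v_iff by auto
  have P: "Neg e \<in> xi_at E1 \<xi> []" using mem_xi_at_if_Cons_mem[OF \<xi> e(3)] .
  from Omega_local[OF \<xi> Omega_Nil[OF \<xi>]] show ?thesis
  proof
    assume "\<exists>u\<in>E01. xi_at E1 \<xi> [] = Pos ` {e \<in> E1. s e = u}"
    then show ?thesis using P by auto
  next
    assume "\<exists>u\<in>E00. \<exists>f. (\<forall>X\<in>Cv r C u. f X \<in> X) \<and> xi_at E1 \<xi> [] = {Neg (f X) |X. X \<in> Cv r C u}"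
    then obtain u f where f: "\<forall>X\<in>Cv r C u. f X \<in> X" "xi_at E1 \<xi> [] = {Neg (f X) |X. X \<in> Cv r C u}"
      by blast
    then obtain X' where "X' \<in> Cv r C u" "e = f X'" using P by auto
    then have "u = v" using f(1) Cv_memD[OF e(1,2)] Cv_memD by metis
    then show ?thesis using f that by blast
  qed
qed

definition choice_of :: "'e letter list set \<Rightarrow> 'e letter list \<Rightarrow> 'e set \<Rightarrow> 'e" where
  "choice_of \<xi> \<alpha> Y =
     (if \<exists>e\<in>Y. Neg e # \<alpha> \<in> \<xi> then SOME e. e \<in> Y \<and> Neg e # \<alpha> \<in> \<xi> else SOME e. e \<in> Y)"

lemma choice_fun_choice_of: "choice_fun (choice_of \<xi>)"
  unfolding choice_fun_def
proof (intro allI impI)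
  fix \<alpha> Y assume Y: "Y \<in> C"
  show "choice_of \<xi> \<alpha> Y \<in> Y"
  proof (cases "\<exists>e\<in>Y. Neg e # \<alpha> \<in> \<xi>")
    case True
    then have "\<exists>e. e \<in> Y \<and> Neg e # \<alpha> \<in> \<xi>" by blast
    from someI_ex[OF this] show ?thesis using True by (simp add: choice_of_def)
  next
    case False
    have "\<exists>e. e \<in> Y" using class_nonempty[OF Y] by blast
    from someI_ex[OF this] show ?thesis using False by (simp add: choice_of_def)
  qed
qed

lemma choice_of_eq:
  assumes \<xi>: "\<xi> \<in> \<Omega>" and f: "xi_at E1 \<xi> \<alpha> = {Neg (f X) |X. X \<in> Cv r C u}" "\<forall>X\<in>Cv r C u. f X \<in> X"
    and X: "X \<in> Cv r C u" "e \<in> X" "Neg e # \<alpha> \<in> \<xi>"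
  shows "choice_of \<xi> \<alpha> X = e"
proof -
  have unique: "e' = f X" if e': "e' \<in> X" "Neg e' # \<alpha> \<in> \<xi>" for e'
  proof -
    obtain X' where X': "X' \<in> Cv r C u" "e' = f X'"
      using mem_xi_at_if_Cons_mem[OF \<xi> e'(2)] f(1) by auto
    then have "X = X'" using class_unique Cv_in_C X(1) e'(1) f(2) by metis
    then show ?thesis using X' by simp
  qed
  have ex: "\<exists>e. e \<in> X \<and> Neg e # \<alpha> \<in> \<xi>" using X(2,3) by blast
  have "choice_of \<xi> \<alpha> X = (SOME e. e \<in> X \<and> Neg e # \<alpha> \<in> \<xi>)"
    using X(2,3) unfolding choice_of_def by (metis (mono_tags, lifting))
  also have "\<dots> = f X" using someI_ex[OF ex] unique by blast
  also have "\<dots> = e" using unique X(2,3) by simp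
  finally show ?thesis .
qed

lemma config_choice_of_subset:
  assumes \<xi>: "\<xi> \<in> \<Omega>\<^sub>v v" shows "config v (choice_of \<xi>) \<subseteq> \<xi>"
proof
  have \<Omega>: "\<xi> \<in> \<Omega>" using \<xi> unfolding mem_Omega_v_iff by blast
  fix w assume "w \<in> config v (choice_of \<xi>)"
  then show "w \<in> \<xi>"
  proof (induction w rule: config.induct)
    case config_Nil then show ?case using Omega_Nil[OF \<Omega>] .
  next
    case (config_root_source f)
    then have "Pos f \<in> xi_at E1 \<xi> []" using xi_at_root_source[OF \<xi>] by blast
    then show ?case using Cons_mem_if_mem_xi_at by blast
  next
    case (config_root_range X)
    then obtain f where f: "\<forall>X\<in>Cv r C v. f X \<in> X" "xi_at E1 \<xi> [] = {Neg (f X) |X. X \<in> Cv r C v}"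
      using xi_at_root_range[OF \<xi>] by blast
    then have "Neg (f X) \<in> xi_at E1 \<xi> []" using config_root_range(2) by blast
    then have "[Neg (f X)] \<in> \<xi>" using Cons_mem_if_mem_xi_at by blast
    moreover from this have "choice_of \<xi> [] X = f X"
      using choice_of_eq[OF \<Omega> f(2,1) config_root_range(2)] f(1) config_root_range(2) by blast
    ultimately show ?case by simp
  next
    case (config_Neg e \<beta> f)
    have "xi_at E1 \<xi> (Neg e # \<beta>) = Pos ` {f \<in> E1. s f = s e}" using xi_at_Neg[OF \<Omega> config_Neg.IH] .
    then have "Pos f \<in> xi_at E1 \<xi> (Neg e # \<beta>)" using config_Neg.hyps by auto
    then show ?case by (rule Cons_mem_if_mem_xi_at) (use config_Neg.hyps(4) in simp)
  next
    case (config_Pos e \<beta> Y)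
    obtain f where f: "\<forall>X\<in>Cv r C (r e). f X \<in> X"
      "xi_at E1 \<xi> (Pos e # \<beta>) = {Neg (f X) |X. X \<in> Cv r C (r e)}"
      using xi_at_Pos[OF \<Omega> config_Pos.IH] by blast
    have "f Y \<noteq> e"
      using f(1) config_Pos.hyps(2,3) cls_eq[OF Cv_in_C[OF config_Pos.hyps(2)]] by metis
    moreover have "Neg (f Y) \<in> xi_at E1 \<xi> (Pos e # \<beta>)" using f(2) config_Pos.hyps(2) by blast
    ultimately have "Neg (f Y) # Pos e # \<beta> \<in> \<xi>" by (intro Cons_mem_if_mem_xi_at) simp_all
    moreover from this have "choice_of \<xi> (Pos e # \<beta>) Y = f Y"
      using choice_of_eq[OF \<Omega> f(2,1) config_Pos.hyps(2)] f(1) config_Pos.hyps(2) by blast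
    ultimately show ?case by simp
  qed
qed

lemma singleton_mem_config_choice_of:
  assumes \<xi>: "\<xi> \<in> \<Omega>\<^sub>v v" and \<sigma>: "[\<sigma>] \<in> \<xi>" shows "[\<sigma>] \<in> config v (choice_of \<xi>)"
proof -
  have \<Omega>: "\<xi> \<in> \<Omega>" using \<xi> unfolding mem_Omega_v_iff by blast
  have \<sigma>': "\<sigma> \<in> xi_at E1 \<xi> []" using mem_xi_at_if_Cons_mem[OF \<Omega> \<sigma>] .
  show ?thesis
  proof (cases "v \<in> E01")
    case True
    then obtain f where "f \<in> E1" "s f = v" "\<sigma> = Pos f"
      using \<sigma>' xi_at_root_source[OF \<xi>] by auto
    then show ?thesis using config_root_source True by simp
  next
    case False
    then obtain f where f: "\<forall>X\<in>Cv r C v. f X \<in> X" "xi_at E1 \<xi> [] = {Neg (f X) |X. X \<in> Cv r C v}"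
      using xi_at_root_range[OF \<xi>] by blast
    then obtain X where X: "X \<in> Cv r C v" "\<sigma> = Neg (f X)" using \<sigma>' by auto
    then have "choice_of \<xi> [] X = f X"
      using choice_of_eq[OF \<Omega> f(2,1) X(1)] f(1) \<sigma> by simp
    then show ?thesis using config_root_range[OF False X(1), of "choice_of \<xi>"] X by simp
  qed
qed

lemma Cons_Pos_mem_config_choice_of:
  assumes \<Omega>: "\<xi> \<in> \<Omega>" and \<sigma>: "\<sigma> # Pos e # \<beta> \<in> \<xi>" and pe: "Pos e # \<beta> \<in> config v (choice_of \<xi>)"
  shows "\<sigma> # Pos e # \<beta> \<in> config v (choice_of \<xi>)"
proof -
  have pe': "Pos e # \<beta> \<in> \<xi>" using Omega_tl[OF \<Omega> \<sigma>] by simp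
  obtain f where f: "\<forall>X\<in>Cv r C (r e). f X \<in> X"
    "xi_at E1 \<xi> (Pos e # \<beta>) = {Neg (f X) |X. X \<in> Cv r C (r e)}"
    using xi_at_Pos[OF \<Omega> pe'] by blast
  obtain X where X: "X \<in> Cv r C (r e)" "\<sigma> = Neg (f X)"
    using mem_xi_at_if_Cons_mem[OF \<Omega> \<sigma>] f(2) by auto
  obtain X0 where X0: "X0 \<in> Cv r C (r e)" "e = f X0"
    using linv_mem_xi_at[OF \<Omega> pe'] f(2) by auto
  then have "cls C e = X0" using cls_eq[OF Cv_in_C[OF X0(1)]] f(1) by metis
  then have "f (cls C e) = e" using X0 by simp
  moreover have "\<sigma> \<noteq> Neg e" using Omega_reduced[OF \<Omega> \<sigma>] by (cases \<sigma>) (auto simp: reduced_Cons)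
  ultimately have "X \<noteq> cls C e" using X(2) by auto
  then have "Neg (choice_of \<xi> (Pos e # \<beta>) X) # Pos e # \<beta> \<in> config v (choice_of \<xi>)"
    using config_Pos[OF pe X(1)] by simp
  moreover have "choice_of \<xi> (Pos e # \<beta>) X = f X"
    using choice_of_eq[OF \<Omega> f(2,1) X(1)] f(1) X \<sigma> by simp
  ultimately show ?thesis using X(2) by simp
qed

lemma subset_config_choice_of:
  assumes \<xi>: "\<xi> \<in> \<Omega>\<^sub>v v" shows "\<xi> \<subseteq> config v (choice_of \<xi>)"
proof
  have \<Omega>: "\<xi> \<in> \<Omega>" using \<xi> unfolding mem_Omega_v_iff by blast
  fix w assume "w \<in> \<xi>"
  then show "w \<in> config v (choice_of \<xi>)"
  proof (induction w rule: induct_list012)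
    case 1 show ?case by (rule config_Nil)
  next
    case (2 \<sigma>) then show ?case by (rule singleton_mem_config_choice_of[OF \<xi>])
  next
    case (3 \<sigma> \<tau> \<beta>)
    have \<tau>\<beta>: "\<tau> # \<beta> \<in> config v (choice_of \<xi>)" using "3.IH"(2) Omega_tl[OF \<Omega> "3.prems"] by simp
    show ?case
    proof (cases \<tau>)
      case (Pos e)
      then show ?thesis using Cons_Pos_mem_config_choice_of[OF \<Omega>] "3.prems" \<tau>\<beta> by simp
    next
      case (Neg e)
      have "Neg e # \<beta> \<in> \<xi>" using Omega_tl[OF \<Omega> "3.prems"] Neg by simp
      then obtain f where f: "f \<in> E1" "s f = s e" "\<sigma> = Pos f"
        using mem_xi_at_if_Cons_mem[OF \<Omega> "3.prems"] xi_at_Neg[OF \<Omega>] Neg by auto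
      moreover have "\<sigma> \<noteq> Pos e"
        using Omega_reduced[OF \<Omega> "3.prems"] Neg by (cases \<sigma>) (auto simp: reduced_Cons)
      ultimately show ?thesis using config_Neg[of e \<beta> v "choice_of \<xi>" f] \<tau>\<beta> Neg by simp
    qed
  qed
qed

theorem Omega_v_eq_config: "\<xi> \<in> \<Omega>\<^sub>v v \<Longrightarrow> \<xi> = config v (choice_of \<xi>)"
  using config_choice_of_subset subset_config_choice_of by blast

lemma config_agree_upto:
  assumes root: "\<And>X. v \<notin> E01 \<Longrightarrow> X \<in> Cv r C v \<Longrightarrow> ch [] X = ch' [] X"
    and node: "\<And>e \<beta> Y. Pos e # \<beta> \<in> config v ch \<Longrightarrow> length (Pos e # \<beta>) < L \<Longrightarrow>
        Y \<in> Cv r C (r e) \<Longrightarrow> Y \<noteq> cls C e \<Longrightarrow> ch (Pos e # \<beta>) Y = ch' (Pos e # \<beta>) Y"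
    and "length w \<le> L"
  shows "w \<in> config v ch \<longleftrightarrow> w \<in> config v ch'"
  using assms(3)
proof (induction w)
  case Nil then show ?case by (simp add: config_Nil)
next
  case (Cons \<sigma> \<alpha>)
  then have IH: "\<alpha> \<in> config v ch \<longleftrightarrow> \<alpha> \<in> config v ch'" and short: "length \<alpha> < L" by simp_all
  show ?case
  proof (cases \<alpha>)
    case Nil then show ?thesis using root by (auto simp: config_singleton_iff)
  next
    case (Cons \<tau> \<beta>)
    then show ?thesis
    proof (cases \<tau>)
      case (Pos e)
      show ?thesis
      proof (cases "Pos e # \<beta> \<in> config v ch")
        case True
        have "length (Pos e # \<beta>) < L" using short Cons Pos by simp
        then have "Y \<in> Cv r C (r e) \<Longrightarrow> Y \<noteq> cls C e \<Longrightarrow> ch (Pos e # \<beta>) Y = ch' (Pos e # \<beta>) Y" for Y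
          using node True by blast
        then have "(\<exists>Y\<in>Cv r C (r e). Y \<noteq> cls C e \<and> \<sigma> = Neg (ch (Pos e # \<beta>) Y)) \<longleftrightarrow>
                   (\<exists>Y\<in>Cv r C (r e). Y \<noteq> cls C e \<and> \<sigma> = Neg (ch' (Pos e # \<beta>) Y))"
          by metis
        then show ?thesis using IH True Cons Pos by (simp add: config_Cons_Pos_iff)
      next
        case False
        then show ?thesis using IH Cons Pos by (simp add: config_Cons_Pos_iff)
      qed
    next
      case (Neg e)
      then show ?thesis using IH Cons by (simp add: config_Cons_Neg_iff)
    qed
  qed
qed

text \<open>\<open>composable a b\<close>: the two-letter word \<open>a b\<close> (with \<open>b\<close> read first) is admissible.\<close>

definition composable :: "'e letter \<Rightarrow> 'e letter \<Rightarrow> bool" where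
  "composable a b \<longleftrightarrow> lsrc r s a = lrng r s b \<and> \<not> (\<exists>e. a = Pos e \<and> b = Neg e) \<and>
      \<not> (\<exists>e f. a = Neg e \<and> b = Pos f \<and> cls C e = cls C f)"

lemma adm_word_Cons: "adm_word E1 r s C (a # w) \<longleftrightarrow>
   a \<in> letters E1 \<and> (w = [] \<or> adm_word E1 r s C w \<and> composable a (hd w))"
  unfolding adm_word_def all_adjacent_Cons[where P = composable, unfolded composable_def]
  by (auto simp: composable_def)

lemma adm_word_pair: "adm_word E1 r s C [a, b] \<longleftrightarrow> a \<in> letters E1 \<and> b \<in> letters E1 \<and> composable a b"
  by (auto simp: adm_word_Cons)

lemma adm_word_snoc:
  "adm_word E1 r s C w \<Longrightarrow> adm_word E1 r s C [last w, b] \<Longrightarrow> adm_word E1 r s C (w @ [b])"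
proof (induction w rule: induct_list012)
  case 1 then show ?case by (simp add: adm_word_def)
next
  case (3 a c u)
  then show ?case by (auto simp: adm_word_Cons)
qed simp

lemma adm_word_suffix: "adm_word E1 r s C (u @ w) \<Longrightarrow> w \<noteq> [] \<Longrightarrow> adm_word E1 r s C w"
  by (induction u) (auto simp: adm_word_Cons Cons_eq_append_conv)

lemma adm_word_last_pair:
  assumes "adm_word E1 r s C w" "last w = \<sigma>" "w \<noteq> [\<sigma>]"
  obtains \<tau> where "adm_word E1 r s C [\<tau>, \<sigma>]"
proof -
  have "w \<noteq> []" using assms(1) by (simp add: adm_word_def)
  then obtain u where u: "w = u @ [\<sigma>]" using assms(2) by (metis append_butlast_last_id)
  then obtain u' \<tau> where "w = u' @ [\<tau>, \<sigma>]" using assms(3) by (metis append_butlast_last_id append.assoc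
      append_Cons append_Nil)
  then show ?thesis using adm_word_suffix assms(1) that by blast
qed

abbreviation "DE \<equiv> dead_ends E1 r s C"

lemma mem_dead_ends_iff:
  "\<sigma> \<in> DE \<longleftrightarrow> \<sigma> \<in> letters E1 \<and> \<not> (\<exists>w. choice_path E1 r s C w \<and> last w = \<sigma>)"
  by (simp add: dead_ends_def)

lemma dead_ends_subset_letters: "DE \<subseteq> letters E1"
  by (auto simp: dead_ends_def)

text \<open>Prolonging a choice path ending in \<open>\<tau>\<close> by \<open>\<sigma>\<close>: dead ends propagate backwards.\<close>

lemma dead_end_if_composable:
  assumes "adm_word E1 r s C [\<tau>, \<sigma>]" "\<sigma> \<in> DE" shows "\<tau> \<in> DE"
proof (rule ccontr)
  assume "\<tau> \<notin> DE"
  moreover have "\<tau> \<in> letters E1" using assms(1) by (simp add: adm_word_pair)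
  ultimately obtain w where w: "choice_path E1 r s C w" "last w = \<tau>"
    by (auto simp: mem_dead_ends_iff)
  have aw: "adm_word E1 r s C w" "w \<noteq> []" using w(1) by (auto simp: choice_path_def adm_word_def)
  have "adm_word E1 r s C (w @ [\<sigma>])" using adm_word_snoc[OF aw(1)] assms(1) w(2) by simp
  moreover have "hd (w @ [\<sigma>]) = hd w" using aw(2) by simp
  ultimately have "choice_path E1 r s C (w @ [\<sigma>])" using w(1) unfolding choice_path_def by simp
  then show False using assms(2) by (auto simp: mem_dead_ends_iff)
qed

lemma Neg_dead_end_if_unique_source:
  assumes e: "e \<in> E1" and card: "\<not> 2 \<le> card {f\<in>E1. s f = s e}" shows "Neg e \<in> DE"
proof (rule ccontr)
  assume "Neg e \<notin> DE"
  then obtain w where w: "choice_path E1 r s C w" "last w = Neg e"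
    using e by (auto simp: mem_dead_ends_iff)
  then have "w \<noteq> [Neg e]" by (auto simp: choice_path_def)
  then obtain \<tau> where "adm_word E1 r s C [\<tau>, Neg e]"
    using adm_word_last_pair w by (auto simp: choice_path_def)
  then have \<tau>: "\<tau> \<in> letters E1" "composable \<tau> (Neg e)" by (auto simp: adm_word_pair)
  show False
  proof (cases \<tau>)
    case (Pos f)
    then have "f \<in> E1" "s f = s e" "f \<noteq> e" using \<tau> by (auto simp: composable_def)
    then show False using card two_le_card[of _ f e] e finite_E1 by simp
  next
    case (Neg f)
    then show False using \<tau> e r_ne_s by (auto simp: composable_def)
  qed
qed

lemma Pos_dead_end_if_unique_class:
  assumes e: "e \<in> E1" and card: "\<not> 2 \<le> card (Cv r C (r e))" shows "Pos e \<in> DE"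
proof (rule ccontr)
  assume "Pos e \<notin> DE"
  then obtain w where w: "choice_path E1 r s C w" "last w = Pos e"
    using e by (auto simp: mem_dead_ends_iff)
  have other_class: False if "X \<in> Cv r C (r e)" "X \<noteq> cls C e" for X
    using two_le_card[OF finite_Cv that(1) cls_in_Cv[OF e] that(2)] card by simp
  show False
  proof (cases "w = [Pos e]")
    case True
    then show False using w(1) other_class by (auto simp: choice_path_def)
  next
    case False
    then obtain \<tau> where "adm_word E1 r s C [\<tau>, Pos e]"
      using adm_word_last_pair w by (auto simp: choice_path_def)
    then have \<tau>: "\<tau> \<in> letters E1" "composable \<tau> (Pos e)" by (auto simp: adm_word_pair)
    show False
    proof (cases \<tau>)
      case (Neg g)
      then have "g \<in> E1" "r g = r e" "cls C g \<noteq> cls C e" using \<tau> by (auto simp: composable_def)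
      then show False using other_class cls_in_Cv by metis
    next
      case (Pos g)
      then show False using \<tau> e r_ne_s by (auto simp: composable_def) metis
    qed
  qed
qed

lemma dead_end_Pos_other_classes_singleton:
  assumes "Pos e \<in> DE" "Y \<in> Cv r C (r e)" "Y \<noteq> cls C e" shows "\<not> 2 \<le> card Y"
proof
  assume "2 \<le> card Y"
  then have "choice_path E1 r s C [Pos e]"
    using assms dead_ends_subset_letters by (auto simp: choice_path_def adm_word_Cons)
  then show False using assms(1) by (auto simp: mem_dead_ends_iff)
qed

subsection \<open>The \<open>\<partial>\<close>-closure as an increasing union\<close>

abbreviation "dclosed' \<equiv> dclosed E00 E01 E1 r s C"
abbreviation "dclosure' \<equiv> dclosure E00 E01 E1 r s C"

lemma dclosed_Inter:
  assumes "\<forall>B\<in>F. dclosed' B" shows "dclosed' (\<Inter>F)"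
  unfolding dclosed_def
proof (intro conjI ballI impI allI)
  fix v e assume v: "v \<in> E01" "2 \<le> card {e\<in>E1. s e = v}" "e \<in> E1" "s e = v"
     "Pos ` ({f\<in>E1. s f = v} - {e}) \<subseteq> \<Inter>F"
  show "Neg e \<in> \<Inter>F"
  proof
    fix B assume B: "B \<in> F"
    have "Pos ` ({f\<in>E1. s f = v} - {e}) \<subseteq> B" using v(5) B by blast
    moreover have "dclosed' B" using assms B by blast
    ultimately show "Neg e \<in> B" using v(1-4) unfolding dclosed_def by blast
  qed
next
  fix v X assume v: "v \<in> E00" "2 \<le> card (Cv r C v)" "X \<in> Cv r C v"
     "\<forall>Y\<in>Cv r C v - {X}. Neg ` Y \<inter> \<Inter>F \<noteq> {}"
  show "Pos ` X \<subseteq> \<Inter>F"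
  proof (intro subsetI InterI)
    fix x B assume x: "x \<in> Pos ` X" and B: "B \<in> F"
    have "\<forall>Y\<in>Cv r C v - {X}. Neg ` Y \<inter> B \<noteq> {}" using v(4) B by blast
    moreover have "dclosed' B" using assms B by blast
    ultimately have "Pos ` X \<subseteq> B" using v(1-3) unfolding dclosed_def by blast
    then show "x \<in> B" using x by blast
  qed
qed

lemma dclosed_letters: "dclosed' (letters E1)"
  unfolding dclosed_def
proof (intro conjI ballI impI allI)
  fix v X assume "X \<in> Cv r C v"
  then have "X \<subseteq> E1" using class_subset Cv_in_C by blast
  then show "Pos ` X \<subseteq> letters E1" by (auto simp: letters_def)
qed simp

lemma dclosure:
  assumes "A \<subseteq> letters E1"
  shows "dclosed' (dclosure' A)" "dclosure' A \<subseteq> letters E1" "A \<subseteq> dclosure' A"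
proof -
  let ?F = "{B. B \<subseteq> letters E1 \<and> A \<subseteq> B \<and> dclosed' B}"
  have "dclosure' A = \<Inter>?F" by (simp add: dclosure_def)
  moreover have "letters E1 \<in> ?F" using dclosed_letters assms by simp
  ultimately show "dclosed' (dclosure' A)" "dclosure' A \<subseteq> letters E1" "A \<subseteq> dclosure' A"
    using dclosed_Inter[of ?F] by auto
qed

lemma dclosure_least: "B \<subseteq> letters E1 \<Longrightarrow> A \<subseteq> B \<Longrightarrow> dclosed' B \<Longrightarrow> dclosure' A \<subseteq> B"
  unfolding dclosure_def by blast

definition dclosure_step :: "'e letter set \<Rightarrow> 'e letter set" where
  "dclosure_step A = A
     \<union> {Neg e |e. e \<in> E1 \<and> 2 \<le> card {f\<in>E1. s f = s e} \<and> Pos ` ({f\<in>E1. s f = s e} - {e}) \<subseteq> A}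
     \<union> {Pos e |e. e \<in> E1 \<and> 2 \<le> card (Cv r C (r e)) \<and> (\<forall>Y\<in>Cv r C (r e) - {cls C e}. Neg ` Y \<inter> A \<noteq> {})}"

definition dclosure_iter :: "'e letter set \<Rightarrow> nat \<Rightarrow> 'e letter set" where
  "dclosure_iter A n = (dclosure_step ^^ n) A"

lemma dclosure_iter_0 [simp]: "dclosure_iter A 0 = A"
  and dclosure_iter_Suc: "dclosure_iter A (Suc n) = dclosure_step (dclosure_iter A n)"
  by (simp_all add: dclosure_iter_def)

lemma dclosure_iter_mono: "m \<le> n \<Longrightarrow> dclosure_iter A m \<subseteq> dclosure_iter A n"
proof (induction n)
  case (Suc n)
  show ?case
  proof (cases "m = Suc n")
    case False
    then have "dclosure_iter A m \<subseteq> dclosure_iter A n" using Suc by simp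
    then show ?thesis unfolding dclosure_iter_Suc dclosure_step_def by blast
  qed simp
qed simp

lemma dclosure_step_subset:
  assumes "A \<subseteq> letters E1" "B \<subseteq> dclosure' A" shows "dclosure_step B \<subseteq> dclosure' A"
proof -
  note closed = dclosure(1)[OF assms(1), unfolded dclosed_def]
  have "Neg e \<in> dclosure' A"
    if e: "e \<in> E1" "2 \<le> card {f\<in>E1. s f = s e}" "Pos ` ({f\<in>E1. s f = s e} - {e}) \<subseteq> B" for e
  proof -
    have "Pos ` ({f\<in>E1. s f = s e} - {e}) \<subseteq> dclosure' A" using e(3) assms(2) by blast
    then show ?thesis using closed s_in_E01[OF e(1)] e(1,2) by blast
  qed
  moreover have "Pos e \<in> dclosure' A"
    if e: "e \<in> E1" "2 \<le> card (Cv r C (r e))" "\<forall>Y\<in>Cv r C (r e) - {cls C e}. Neg ` Y \<inter> B \<noteq> {}" for e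
  proof -
    have "\<forall>Y\<in>Cv r C (r e) - {cls C e}. Neg ` Y \<inter> dclosure' A \<noteq> {}" using e(3) assms(2) by blast
    then have "Pos ` cls C e \<subseteq> dclosure' A"
      using closed r_in_E00[OF e(1)] e(2) cls_in_Cv[OF e(1)] by blast
    then show ?thesis using mem_cls[OF e(1)] by blast
  qed
  ultimately show ?thesis using assms(2) unfolding dclosure_step_def by blast
qed

lemma dclosure_iter_subset: "A \<subseteq> letters E1 \<Longrightarrow> dclosure_iter A n \<subseteq> dclosure' A"
  by (induction n) (simp_all add: dclosure(3) dclosure_iter_Suc dclosure_step_subset)

lemma finite_subset_dclosure_iter:
  "finite F \<Longrightarrow> F \<subseteq> (\<Union>n. dclosure_iter A n) \<Longrightarrow> \<exists>n. F \<subseteq> dclosure_iter A n"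
proof (induction F rule: finite_induct)
  case (insert x F)
  then obtain n m where "F \<subseteq> dclosure_iter A n" "x \<in> dclosure_iter A m" by blast
  then show ?case using dclosure_iter_mono[of n "max m n" A] dclosure_iter_mono[of m "max m n" A]
    by (intro exI[of _ "max m n"]) auto
qed simp

lemma dclosed_Union_dclosure_iter: "dclosed' (\<Union>n. dclosure_iter A n)"
  unfolding dclosed_def
proof (intro conjI ballI impI allI)
  fix v e assume v: "v \<in> E01" "2 \<le> card {e\<in>E1. s e = v}" "e \<in> E1" "s e = v"
     "Pos ` ({f\<in>E1. s f = v} - {e}) \<subseteq> (\<Union>n. dclosure_iter A n)"
  have "finite (Pos ` ({f\<in>E1. s f = v} - {e}))" using finite_E1 by simp
  then obtain n where "Pos ` ({f\<in>E1. s f = v} - {e}) \<subseteq> dclosure_iter A n"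
    using finite_subset_dclosure_iter v(5) by blast
  then have "Neg e \<in> dclosure_iter A (Suc n)"
    unfolding dclosure_iter_Suc dclosure_step_def using v(2,3,4) by blast
  then show "Neg e \<in> (\<Union>n. dclosure_iter A n)" by blast
next
  fix v X assume v: "v \<in> E00" "2 \<le> card (Cv r C v)" "X \<in> Cv r C v"
     "\<forall>Y\<in>Cv r C v - {X}. Neg ` Y \<inter> (\<Union>n. dclosure_iter A n) \<noteq> {}"
  define w where "w Y = (SOME \<sigma>. \<sigma> \<in> Neg ` Y \<inter> (\<Union>n. dclosure_iter A n))" for Y
  have w: "w Y \<in> Neg ` Y \<inter> (\<Union>n. dclosure_iter A n)" if "Y \<in> Cv r C v - {X}" for Y
    unfolding w_def using v(4) that by (metis (no_types, lifting) ex_in_conv someI_ex)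
  have "finite (w ` (Cv r C v - {X}))" using finite_Cv by simp
  moreover have "w ` (Cv r C v - {X}) \<subseteq> (\<Union>n. dclosure_iter A n)" using w by blast
  ultimately obtain n where "w ` (Cv r C v - {X}) \<subseteq> dclosure_iter A n"
    using finite_subset_dclosure_iter by blast
  then have all: "\<forall>Y\<in>Cv r C v - {X}. Neg ` Y \<inter> dclosure_iter A n \<noteq> {}"
    using w by (metis (no_types, lifting) IntE IntI empty_iff image_subset_iff)
  show "Pos ` X \<subseteq> (\<Union>n. dclosure_iter A n)"
  proof
    fix x assume "x \<in> Pos ` X"
    then obtain e where e: "e \<in> X" "x = Pos e" by blast
    have "r e = v" "e \<in> E1" "cls C e = X" using Cv_memD[OF v(3) e(1)] cls_eq[OF Cv_in_C[OF v(3)] e(1)] by auto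
    then have "Pos e \<in> dclosure_iter A (Suc n)"
      unfolding dclosure_iter_Suc dclosure_step_def using v(2) all by auto
    then show "x \<in> (\<Union>n. dclosure_iter A n)" using e(2) by blast
  qed
qed

lemma dclosure_eq_dclosure_iter:
  assumes "A \<subseteq> letters E1" obtains N where "dclosure' A = dclosure_iter A N"
proof -
  have "dclosure' A \<subseteq> (\<Union>n. dclosure_iter A n)"
  proof (rule dclosure_least)
    show "(\<Union>n. dclosure_iter A n) \<subseteq> letters E1"
      using dclosure_iter_subset[OF assms] dclosure(2)[OF assms] by blast
    show "A \<subseteq> (\<Union>n. dclosure_iter A n)" using dclosure_iter_0 by blast
  qed (rule dclosed_Union_dclosure_iter)
  moreover have "finite (dclosure' A)"
    using dclosure(2)[OF assms] finite_letters[OF finite_E1] finite_subset by blast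
  ultimately obtain N where "dclosure' A \<subseteq> dclosure_iter A N" using finite_subset_dclosure_iter by blast
  then show ?thesis using dclosure_iter_subset[OF assms] that by blast
qed

definition dclosure_rank :: "'e letter set \<Rightarrow> 'e letter \<Rightarrow> nat" where
  "dclosure_rank A \<sigma> = (LEAST n. \<sigma> \<in> dclosure_iter A n)"

lemma dclosure_rank:
  "\<sigma> \<in> dclosure_iter A n \<Longrightarrow> \<sigma> \<in> dclosure_iter A (dclosure_rank A \<sigma>) \<and> dclosure_rank A \<sigma> \<le> n"
  unfolding dclosure_rank_def by (metis LeastI Least_le)

lemma dclosure_rank_Suc:
  assumes "\<sigma> \<in> dclosure_iter A n" "dclosure_rank A \<sigma> = Suc k"
  shows "\<sigma> \<in> dclosure_step (dclosure_iter A k) - dclosure_iter A k"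
  using dclosure_rank[OF assms(1)] assms(2) dclosure_rank[of \<sigma> A k]
  by (auto simp: dclosure_iter_Suc)

lemma dclosure_rank_Neg:
  assumes "Neg e \<in> dclosure_iter A n" "dclosure_rank A (Neg e) = Suc k"
  shows "Pos ` ({f\<in>E1. s f = s e} - {e}) \<subseteq> dclosure_iter A k"
  using dclosure_rank_Suc[OF assms] unfolding dclosure_step_def by blast

lemma dclosure_rank_Pos:
  assumes "Pos e \<in> dclosure_iter A n" "dclosure_rank A (Pos e) = Suc k"
  shows "\<forall>Y\<in>Cv r C (r e) - {cls C e}. Neg ` Y \<inter> dclosure_iter A k \<noteq> {}"
  using dclosure_rank_Suc[OF assms] unfolding dclosure_step_def by blast

abbreviation "DEbar \<equiv> dclosure' DE"
abbreviation "de_rank \<equiv> dclosure_rank DE"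

lemmas dclosure_dead_ends = dclosure[OF dead_ends_subset_letters]

lemma mem_Vset_iff: "v \<in> Vset E00 E01 E1 r s C DE \<longleftrightarrow>
   (v \<in> E00 \<and> (\<forall>X\<in>Cv r C v. Neg ` X \<inter> DEbar \<noteq> {})) \<or> (v \<in> E01 \<and> Pos ` {e\<in>E1. s e = v} \<subseteq> DEbar)"
  unfolding Vset_def by blast

subsection \<open>Isolated points below vertices of \<open>V(A\<^sub>D\<^sub>E)\<close>\<close>

text \<open>
  Where possible, choose an edge whose inverse lies in \<open>DEbar\<close> with least rank. Along the
  branches of the resulting configuration the rank then drops at each step until a dead end is
  reached, after which all choices are forced.
\<close>

definition rank_choice :: "'e set \<Rightarrow> 'e" where
  "rank_choice Y = (if \<exists>e\<in>Y. Neg e \<in> DEbar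
     then SOME e. (e \<in> Y \<and> Neg e \<in> DEbar) \<and> (\<forall>e'. e' \<in> Y \<and> Neg e' \<in> DEbar \<longrightarrow> de_rank (Neg e) \<le> de_rank (Neg e'))
     else SOME e. e \<in> Y)"

lemma rank_choice_least:
  assumes "e' \<in> Y" "Neg e' \<in> DEbar"
  shows "rank_choice Y \<in> Y \<and> Neg (rank_choice Y) \<in> DEbar \<and> de_rank (Neg (rank_choice Y)) \<le> de_rank (Neg e')"
proof -
  define P where "P e \<longleftrightarrow> (e \<in> Y \<and> Neg e \<in> DEbar) \<and>
    (\<forall>e'. e' \<in> Y \<and> Neg e' \<in> DEbar \<longrightarrow> de_rank (Neg e) \<le> de_rank (Neg e'))" for e
  have "\<exists>x. P x"
    using ex_has_least_nat[of "\<lambda>e. e \<in> Y \<and> Neg e \<in> DEbar" e' "\<lambda>e. de_rank (Neg e)"] assms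
    unfolding P_def by blast
  then have "P (SOME e. P e)" by (rule someI_ex)
  moreover have "rank_choice Y = (SOME e. P e)" using assms unfolding rank_choice_def P_def by auto
  ultimately show ?thesis using assms unfolding P_def by simp
qed

lemma choice_fun_rank_choice: "choice_fun (\<lambda>_. rank_choice)"
  unfolding choice_fun_def
proof (intro allI impI)
  fix Y :: "'e set" assume Y: "Y \<in> C"
  show "rank_choice Y \<in> Y"
  proof (cases "\<exists>e\<in>Y. Neg e \<in> DEbar")
    case True then show ?thesis using rank_choice_least by blast
  next
    case False
    have "\<exists>e. e \<in> Y" using class_nonempty[OF Y] by blast
    from someI_ex[OF this] show ?thesis using False unfolding rank_choice_def by simp
  qed
qed

lemma de_rank_drops_after_Neg:
  assumes e: "Neg e \<in> DEbar" "Neg e \<notin> DE" and f: "f \<in> E1" "s f = s e" "f \<noteq> e"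
  shows "Pos f \<in> DEbar \<and> de_rank (Pos f) < de_rank (Neg e)"
proof -
  obtain N where N: "DEbar = dclosure_iter DE N"
    using dclosure_eq_dclosure_iter[OF dead_ends_subset_letters] by blast
  obtain k where k: "de_rank (Neg e) = Suc k"
    using e dclosure_rank[of _ DE N, folded N] by (metis dclosure_iter_0 not0_implies_Suc)
  then have "Pos ` ({f\<in>E1. s f = s e} - {e}) \<subseteq> dclosure_iter DE k"
    using dclosure_rank_Neg e(1) N by blast
  then have "Pos f \<in> dclosure_iter DE k" using f by blast
  then have "Pos f \<in> DEbar" "de_rank (Pos f) \<le> k"
    using dclosure_iter_subset[OF dead_ends_subset_letters] dclosure_rank by blast+
  then show ?thesis using k by simp
qed

lemma de_rank_drops_after_Pos:
  assumes e: "Pos e \<in> DEbar" "Pos e \<notin> DE" and Y: "Y \<in> Cv r C (r e)" "Y \<noteq> cls C e"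
  shows "Neg (rank_choice Y) \<in> DEbar \<and> de_rank (Neg (rank_choice Y)) < de_rank (Pos e)"
proof -
  obtain N where N: "DEbar = dclosure_iter DE N"
    using dclosure_eq_dclosure_iter[OF dead_ends_subset_letters] by blast
  obtain k where k: "de_rank (Pos e) = Suc k"
    using e dclosure_rank[of _ DE N, folded N] by (metis dclosure_iter_0 not0_implies_Suc)
  then have "\<forall>Y\<in>Cv r C (r e) - {cls C e}. Neg ` Y \<inter> dclosure_iter DE k \<noteq> {}"
    using dclosure_rank_Pos e(1) N by blast
  then obtain e' where e': "e' \<in> Y" "Neg e' \<in> dclosure_iter DE k" using Y by blast
  then have "Neg e' \<in> DEbar" "de_rank (Neg e') \<le> k"
    using dclosure_iter_subset[OF dead_ends_subset_letters] dclosure_rank by blast+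
  then have "Neg (rank_choice Y) \<in> DEbar" "de_rank (Neg (rank_choice Y)) \<le> k"
    using rank_choice_least[OF e'(1)] by auto
  then show ?thesis using k by simp
qed

lemma config_rank_choice_bound:
  assumes V: "v \<in> Vset E00 E01 E1 r s C DE" and N: "DEbar = dclosure_iter DE N"
    and "\<alpha> \<in> config v (\<lambda>_. rank_choice)" "\<alpha> \<noteq> []"
  shows "hd \<alpha> \<in> DEbar \<and> (hd \<alpha> \<in> DE \<or> de_rank (hd \<alpha>) + length \<alpha> \<le> N + 1)"
proof -
  note ranked = dclosure_rank[of _ DE N, folded N]
  from assms(3,4) show ?thesis
  proof (induction \<alpha> rule: config.induct)
    case config_Nil then show ?case by simp
  next
    case (config_root_source f)
    have "v \<notin> E00" using config_root_source.hyps(1) E00_E01_disjoint by blast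
    then have "Pos f \<in> DEbar" using V config_root_source.hyps unfolding mem_Vset_iff by blast
    then show ?case using ranked by fastforce
  next
    case (config_root_range X)
    have "\<forall>X\<in>Cv r C v. Neg ` X \<inter> DEbar \<noteq> {}"
      using V config_root_range.hyps(1) unfolding mem_Vset_iff by blast
    then obtain e' where "e' \<in> X" "Neg e' \<in> DEbar" using config_root_range.hyps(2) by blast
    then have "Neg (rank_choice X) \<in> DEbar" using rank_choice_least by blast
    then show ?case using ranked by fastforce
  next
    case (config_Neg e \<beta> f)
    then have IH: "Neg e \<in> DEbar" "Neg e \<in> DE \<or> de_rank (Neg e) + length (Neg e # \<beta>) \<le> N + 1"
      by auto
    have "e \<in> E1" using IH(1) dclosure_dead_ends(2) by auto
    then have "adm_word E1 r s C [Pos f, Neg e]"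
      unfolding adm_word_pair composable_def using config_Neg.hyps by simp
    then have "Neg e \<in> DE \<Longrightarrow> Pos f \<in> DE" using dead_end_if_composable by blast
    then show ?case
      using IH de_rank_drops_after_Neg[OF IH(1) _ config_Neg.hyps(2-4)] dclosure_dead_ends(3) by force
  next
    case (config_Pos e \<beta> Y)
    then have IH: "Pos e \<in> DEbar" "Pos e \<in> DE \<or> de_rank (Pos e) + length (Pos e # \<beta>) \<le> N + 1"
      by auto
    have e: "e \<in> E1" using IH(1) dclosure_dead_ends(2) by auto
    have Y: "Y \<in> C" using Cv_in_C[OF config_Pos.hyps(2)] .
    have "rank_choice Y \<in> Y" using choice_funD[OF choice_fun_rank_choice Y] by simp
    then have "rank_choice Y \<in> E1" "r (rank_choice Y) = r e" "cls C (rank_choice Y) = Y"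
      using Cv_memD[OF config_Pos.hyps(2)] cls_eq[OF Y] by auto
    then have "adm_word E1 r s C [Neg (rank_choice Y), Pos e]"
      unfolding adm_word_pair composable_def using e config_Pos.hyps(3) by simp
    then have "Pos e \<in> DE \<Longrightarrow> Neg (rank_choice Y) \<in> DE" using dead_end_if_composable by blast
    then show ?case
      using IH de_rank_drops_after_Pos[OF IH(1) _ config_Pos.hyps(2,3)] dclosure_dead_ends(3) by force
  qed
qed

text \<open>Beyond the bound above all remaining choices are forced, so short words determine the configuration.\<close>

lemma Omega_v_eq_config_rank_choice:
  assumes V: "v \<in> Vset E00 E01 E1 r s C DE" and N: "DEbar = dclosure_iter DE N"
    and \<eta>: "\<eta> \<in> \<Omega>\<^sub>v v"
    and agree: "\<And>w. length w \<le> N + 2 \<Longrightarrow> w \<in> config v (\<lambda>_. rank_choice) \<Longrightarrow> w \<in> \<eta>"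
  shows "\<eta> = config v (\<lambda>_. rank_choice)"
proof -
  have \<Omega>: "\<eta> \<in> \<Omega>" using \<eta> unfolding mem_Omega_v_iff by blast
  have root: "rank_choice X = choice_of \<eta> [] X" if nv: "v \<notin> E01" and X: "X \<in> Cv r C v" for X
  proof -
    have "[Neg (rank_choice X)] \<in> \<eta>" using agree config_root_range[OF nv X, of "\<lambda>_. rank_choice"] by simp
    moreover obtain f where "\<forall>X\<in>Cv r C v. f X \<in> X" "xi_at E1 \<eta> [] = {Neg (f X) |X. X \<in> Cv r C v}"
      using xi_at_root_range[OF \<eta> nv] by blast
    moreover have "rank_choice X \<in> X" using choice_funD[OF choice_fun_rank_choice Cv_in_C[OF X]] by simp
    ultimately show ?thesis using choice_of_eq[OF \<Omega> _ _ X] by simp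
  qed
  have node: "rank_choice Y = choice_of \<eta> (Pos e # \<beta>) Y"
    if pe: "Pos e # \<beta> \<in> config v (\<lambda>_. rank_choice)" and Y: "Y \<in> Cv r C (r e)" "Y \<noteq> cls C e"
    for e \<beta> Y
  proof (cases "length (Pos e # \<beta>) \<le> N + 1")
    case True
    then have m: "Neg (rank_choice Y) # Pos e # \<beta> \<in> \<eta>" using agree config_Pos[OF pe Y] by simp
    obtain f where "\<forall>X\<in>Cv r C (r e). f X \<in> X"
      "xi_at E1 \<eta> (Pos e # \<beta>) = {Neg (f X) |X. X \<in> Cv r C (r e)}"
      using xi_at_Pos[OF \<Omega> Omega_tl[OF \<Omega> m, simplified]] by blast
    moreover have "rank_choice Y \<in> Y" using choice_funD[OF choice_fun_rank_choice Cv_in_C[OF Y(1)]] by simp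
    ultimately show ?thesis using choice_of_eq[OF \<Omega> _ _ Y(1) _ m] by simp
  next
    case False
    then have "Pos e \<in> DE" using config_rank_choice_bound[OF V N pe] by auto
    then have "\<not> 2 \<le> card Y" using dead_end_Pos_other_classes_singleton Y by blast
    then show ?thesis
      using class_card_less_2_eq Cv_in_C[OF Y(1)] choice_fun_rank_choice choice_fun_choice_of
      by (metis choice_funD)
  qed
  have "w \<in> config v (\<lambda>_. rank_choice) \<longleftrightarrow> w \<in> config v (choice_of \<eta>)" for w
    by (rule config_agree_upto[where L = "length w"]) (auto intro: root node)
  then show ?thesis using Omega_v_eq_config[OF \<eta>] by blast
qed

lemma isolated_point_if_mem_Vset:
  assumes v: "v \<in> E00 \<union> E01" and V: "v \<in> Vset E00 E01 E1 r s C DE"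
  shows "\<exists>\<xi>\<in>\<Omega>\<^sub>v v. openin (subtopology set_top (\<Omega>\<^sub>v v)) {\<xi>}"
proof -
  obtain N where N: "DEbar = dclosure_iter DE N"
    using dclosure_eq_dclosure_iter[OF dead_ends_subset_letters] by blast
  define \<xi>0 where "\<xi>0 = config v (\<lambda>_. rank_choice)"
  have \<xi>0: "\<xi>0 \<in> \<Omega>\<^sub>v v" unfolding \<xi>0_def using config_in_Omega_v[OF choice_fun_rank_choice v] .
  define F where "F = {w. set w \<subseteq> letters E1 \<and> length w \<le> N + 2}"
  have "finite F" unfolding F_def using finite_lists_length_le[OF finite_letters[OF finite_E1]] .
  have "w \<in> F" if "w \<in> \<xi>0" "length w \<le> N + 2" for w
    using reduced_config[OF _ choice_fun_rank_choice] that unfolding \<xi>0_def F_def reduced_def by blast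
  then have "\<eta> = \<xi>0" if "\<eta> \<in> \<Omega>\<^sub>v v" "\<forall>w\<in>F. w \<in> \<eta> \<longleftrightarrow> w \<in> \<xi>0" for \<eta>
    using Omega_v_eq_config_rank_choice[OF V N that(1)] that(2) unfolding \<xi>0_def by blast
  then have "openin (subtopology set_top (\<Omega>\<^sub>v v)) {\<xi>0}"
    unfolding openin_singleton_set_top_iff using \<xi>0 \<open>finite F\<close> by blast
  then show ?thesis using \<xi>0 by blast
qed


subsection \<open>No isolated points below the other vertices\<close>

definition choice_node :: "'e letter list \<Rightarrow> bool" where
  "choice_node \<beta> \<longleftrightarrow> (\<exists>e \<gamma> Y. \<beta> = Pos e # \<gamma> \<and> Y \<in> Cv r C (r e) \<and> Y \<noteq> cls C e \<and> 2 \<le> card Y)"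

text \<open>A configuration can only leave an admissible path at a genuine choice.\<close>

lemma config_Cons_if_composable:
  assumes ch: "choice_fun ch" and \<beta>: "b # \<gamma> \<in> config v ch" "\<not> choice_node (b # \<gamma>)"
    and a: "a \<in> letters E1" "composable a b"
  shows "a # b # \<gamma> \<in> config v ch"
proof -
  have b: "b \<in> letters E1" using reduced_config[OF \<beta>(1) ch] by (simp add: reduced_Cons)
  show ?thesis
  proof (cases b)
    case (Neg e)
    then have e: "e \<in> E1" using b by simp
    show ?thesis
    proof (cases a)
      case (Pos f)
      then have "f \<in> E1" "s f = s e" "f \<noteq> e" using a Neg unfolding composable_def by auto
      then show ?thesis using config_Neg[of e \<gamma> v ch f] \<beta>(1) Neg Pos by simp
    next
      case (Neg f)
      then have "f \<in> E1" "r f = s e" using a \<open>b = Neg e\<close> unfolding composable_def by auto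
      then show ?thesis using r_ne_s e by blast
    qed
  next
    case (Pos e)
    then have e: "e \<in> E1" using b by simp
    show ?thesis
    proof (cases a)
      case (Neg g)
      then have g: "g \<in> E1" "r g = r e" "cls C g \<noteq> cls C e"
        using a Pos unfolding composable_def by auto
      define Y where "Y = cls C g"
      have Y: "Y \<in> Cv r C (r e)" "Y \<in> C" "g \<in> Y"
        using cls_in_Cv[OF g(1)] g(2) cls_in_C[OF g(1)] mem_cls[OF g(1)] unfolding Y_def by simp_all
      then have "\<not> 2 \<le> card Y" using \<beta>(2) Pos g(3) unfolding choice_node_def Y_def by blast
      then have "ch (Pos e # \<gamma>) Y = g"
        using class_card_less_2_eq[OF Y(2) _ choice_funD[OF ch Y(2)] Y(3)] by blast
      moreover have "Neg (ch (Pos e # \<gamma>) Y) # Pos e # \<gamma> \<in> config v ch"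
        using config_Pos[of e \<gamma> v ch Y] \<beta>(1) Pos Y(1) g(3) Y_def by simp
      ultimately show ?thesis using Pos Neg by simp
    next
      case (Pos f)
      then have "f \<in> E1" "s f = r e" using a \<open>b = Pos e\<close> unfolding composable_def by auto
      then show ?thesis using r_ne_s e by metis
    qed
  qed
qed

lemma config_follows_adm_word:
  assumes "adm_word E1 r s C w" "\<alpha> \<in> config v ch" "\<alpha> \<noteq> []" "hd \<alpha> = last w" "choice_fun ch"
  shows "(\<exists>\<beta>\<in>config v ch. length \<alpha> \<le> length \<beta> \<and> choice_node \<beta>) \<or>
         (\<exists>\<beta>\<in>config v ch. length \<alpha> \<le> length \<beta> \<and> \<beta> \<noteq> [] \<and> hd \<beta> = hd w)"
  using assms(1,4)
proof (induction w rule: induct_list012)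
  case 1 then show ?case by (simp add: adm_word_def)
next
  case (2 a) then show ?case using assms(2,3) by auto
next
  case (3 a b u)
  have a: "a \<in> letters E1" "adm_word E1 r s C (b # u)" "composable a b"
    using "3.prems"(1) by (auto simp: adm_word_Cons)
  then have IH: "(\<exists>\<beta>\<in>config v ch. length \<alpha> \<le> length \<beta> \<and> choice_node \<beta>) \<or>
         (\<exists>\<beta>\<in>config v ch. length \<alpha> \<le> length \<beta> \<and> \<beta> \<noteq> [] \<and> hd \<beta> = b)"
    using "3.IH"(2) "3.prems"(2) by simp
  show ?case
  proof (cases "\<exists>\<beta>\<in>config v ch. length \<alpha> \<le> length \<beta> \<and> choice_node \<beta>")
    case False
    then obtain \<gamma> where \<beta>: "b # \<gamma> \<in> config v ch" "length \<alpha> \<le> length (b # \<gamma>)" "\<not> choice_node (b # \<gamma>)"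
      using IH by (metis hd_Cons_tl)
    then have "a # b # \<gamma> \<in> config v ch"
      using config_Cons_if_composable[OF assms(5) _ _ a(1,3)] by blast
    then show ?thesis using \<beta>(2) by (intro disjI2 bexI[of _ "a # b # \<gamma>"]) auto
  qed blast
qed

text \<open>Read backwards, the closure rules let a letter outside \<open>DEbar\<close> be continued outside it.\<close>

lemma Pos_outside_dclosure_if_Neg:
  assumes e: "e \<in> E1" and out: "Neg e \<notin> DEbar"
  obtains f where "f \<in> E1" "s f = s e" "f \<noteq> e" "Pos f \<notin> DEbar"
proof -
  have "2 \<le> card {f\<in>E1. s f = s e}"
    using Neg_dead_end_if_unique_source[OF e] out dclosure_dead_ends(3) by blast
  then have "\<not> Pos ` ({f\<in>E1. s f = s e} - {e}) \<subseteq> DEbar"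
    using dclosure_dead_ends(1) s_in_E01[OF e] e out unfolding dclosed_def by blast
  then show ?thesis using that by blast
qed

lemma class_outside_dclosure_if_Pos:
  assumes e: "e \<in> E1" and out: "Pos e \<notin> DEbar"
  obtains Y where "Y \<in> Cv r C (r e)" "Y \<noteq> cls C e" "Neg ` Y \<inter> DEbar = {}"
proof -
  have "2 \<le> card (Cv r C (r e))"
    using Pos_dead_end_if_unique_class[OF e] out dclosure_dead_ends(3) by blast
  then have "\<not> Pos ` cls C e \<subseteq> DEbar \<Longrightarrow> \<not> (\<forall>Y\<in>Cv r C (r e) - {cls C e}. Neg ` Y \<inter> DEbar \<noteq> {})"
    using dclosure_dead_ends(1) r_in_E00[OF e] cls_in_Cv[OF e] unfolding dclosed_def by blast
  moreover have "\<not> Pos ` cls C e \<subseteq> DEbar" using out mem_cls[OF e] by blast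
  ultimately show ?thesis using that by blast
qed

lemma config_extends_outside_dclosure:
  assumes \<alpha>: "\<alpha> \<in> config v ch" "\<alpha> \<noteq> []" "hd \<alpha> \<notin> DEbar" and ch: "choice_fun ch"
  shows "\<exists>\<sigma>. \<sigma> # \<alpha> \<in> config v ch \<and> \<sigma> \<notin> DEbar"
proof -
  obtain \<tau> \<beta> where \<tau>\<beta>: "\<alpha> = \<tau> # \<beta>" using \<alpha>(2) by (cases \<alpha>) auto
  have \<tau>: "\<tau> \<in> letters E1" using reduced_config[OF \<alpha>(1) ch] \<tau>\<beta> by (simp add: reduced_Cons)
  show ?thesis
  proof (cases \<tau>)
    case (Neg e)
    obtain f where f: "f \<in> E1" "s f = s e" "f \<noteq> e" "Pos f \<notin> DEbar"
      using Pos_outside_dclosure_if_Neg \<tau> \<alpha>(3) \<tau>\<beta> Neg by auto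
    then have "Pos f # \<alpha> \<in> config v ch" using config_Neg[of e \<beta> v ch f] \<alpha>(1) \<tau>\<beta> Neg by simp
    then show ?thesis using f(4) by blast
  next
    case (Pos e)
    obtain Y where Y: "Y \<in> Cv r C (r e)" "Y \<noteq> cls C e" "Neg ` Y \<inter> DEbar = {}"
      using class_outside_dclosure_if_Pos \<tau> \<alpha>(3) \<tau>\<beta> Pos by auto
    have "Neg (ch (Pos e # \<beta>) Y) # Pos e # \<beta> \<in> config v ch"
      using config_Pos[of e \<beta> v ch Y] \<alpha>(1) \<tau>\<beta> Pos Y by simp
    moreover have "ch (Pos e # \<beta>) Y \<in> Y" using choice_funD[OF ch Cv_in_C[OF Y(1)]] .
    ultimately show ?thesis using Y(3) \<tau>\<beta> Pos by blast
  qed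
qed

lemma config_root_outside_dclosure:
  assumes "v \<notin> Vset E00 E01 E1 r s C DE" "v \<in> E00 \<union> E01" "choice_fun ch"
  shows "\<exists>\<sigma>. [\<sigma>] \<in> config v ch \<and> \<sigma> \<notin> DEbar"
proof (cases "v \<in> E01")
  case True
  have "\<not> Pos ` {e\<in>E1. s e = v} \<subseteq> DEbar" using assms(1) True unfolding mem_Vset_iff by blast
  then obtain f where f: "f \<in> E1" "s f = v" "Pos f \<notin> DEbar" by blast
  then show ?thesis using config_root_source[OF True f(1,2)] by blast
next
  case False
  then have "v \<in> E00" using assms(2) by blast
  then obtain X where X: "X \<in> Cv r C v" "Neg ` X \<inter> DEbar = {}" using assms(1) unfolding mem_Vset_iff by blast
  have "[Neg (ch [] X)] \<in> config v ch" using config_root_range[OF False X(1)] .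
  moreover have "ch [] X \<in> X" using choice_funD[OF assms(3) Cv_in_C[OF X(1)]] .
  ultimately show ?thesis using X(2) by blast
qed

lemma config_deep_outside_dclosure:
  assumes "v \<notin> Vset E00 E01 E1 r s C DE" "v \<in> E00 \<union> E01" "choice_fun ch"
  shows "\<exists>\<alpha>\<in>config v ch. \<alpha> \<noteq> [] \<and> length \<alpha> = Suc n \<and> hd \<alpha> \<notin> DEbar"
proof (induction n)
  case 0 then show ?case using config_root_outside_dclosure[OF assms] by fastforce
next
  case (Suc n)
  then obtain \<alpha> where a: "\<alpha> \<in> config v ch" "\<alpha> \<noteq> []" "length \<alpha> = Suc n" "hd \<alpha> \<notin> DEbar" by blast
  then obtain \<sigma> where "\<sigma> # \<alpha> \<in> config v ch" "\<sigma> \<notin> DEbar" using config_extends_outside_dclosure[OF a(1,2,4) assms(3)] by blast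
  then show ?case using a(3) by (intro bexI[of _ "\<sigma> # \<alpha>"]) auto
qed

lemma config_deep_choice_node:
  assumes "v \<notin> Vset E00 E01 E1 r s C DE" "v \<in> E00 \<union> E01" "choice_fun ch"
  shows "\<exists>\<beta>\<in>config v ch. n \<le> length \<beta> \<and> choice_node \<beta>"
proof -
  obtain \<alpha> where a: "\<alpha> \<in> config v ch" "\<alpha> \<noteq> []" "length \<alpha> = Suc n" "hd \<alpha> \<notin> DEbar"
    using config_deep_outside_dclosure[OF assms] by blast
  have hl: "hd \<alpha> \<in> letters E1" using reduced_config[OF a(1) assms(3)] a(2) by (cases \<alpha>) (auto simp: reduced_Cons)
  have "hd \<alpha> \<notin> DE" using a(4) dclosure_dead_ends(3) by blast
  then obtain w where w: "choice_path E1 r s C w" "last w = hd \<alpha>" using mem_dead_ends_iff hl by blast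
  have aw: "adm_word E1 r s C w" using w(1) by (simp add: choice_path_def)
  from config_follows_adm_word[OF aw a(1,2) w(2)[symmetric] assms(3)]
  show ?thesis
  proof
    assume "\<exists>\<beta>\<in>config v ch. length \<alpha> \<le> length \<beta> \<and> choice_node \<beta>"
    then obtain \<beta> where "\<beta> \<in> config v ch" "length \<alpha> \<le> length \<beta>" "choice_node \<beta>" by blast
    then show ?thesis using a(3) by (intro bexI[of _ \<beta>]) auto
  next
    assume "\<exists>\<beta>\<in>config v ch. length \<alpha> \<le> length \<beta> \<and> \<beta> \<noteq> [] \<and> hd \<beta> = hd w"
    then obtain \<beta> where b: "\<beta> \<in> config v ch" "length \<alpha> \<le> length \<beta>" "\<beta> \<noteq> []" "hd \<beta> = hd w" by blast
    obtain e where e: "e \<in> E1" "hd w = Pos e" "\<exists>X\<in>Cv r C (r e). X \<noteq> cls C e \<and> 2 \<le> card X"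
      using w(1) unfolding choice_path_def by blast
    obtain \<gamma> where "\<beta> = Pos e # \<gamma>" using b(3,4) e(2) by (cases \<beta>) auto
    then have "choice_node \<beta>" unfolding choice_node_def using e(3) by blast
    then show ?thesis using b(1,2) a(3) by (intro bexI[of _ \<beta>]) auto
  qed
qed

lemma config_change_at_choice_node:
  assumes ch: "choice_fun ch" and \<beta>: "\<beta> \<in> config v ch" "choice_node \<beta>"
  obtains ch' where "choice_fun ch'" "config v ch' \<noteq> config v ch"
    "\<And>w. length w \<le> length \<beta> \<Longrightarrow> w \<in> config v ch' \<longleftrightarrow> w \<in> config v ch"
proof -
  obtain e \<gamma> Y where eY: "\<beta> = Pos e # \<gamma>" "Y \<in> Cv r C (r e)" "Y \<noteq> cls C e" "2 \<le> card Y"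
    using \<beta>(2) unfolding choice_node_def by blast
  have Y: "Y \<in> C" using Cv_in_C[OF eY(2)] .
  obtain g where g: "g \<in> Y" "g \<noteq> ch \<beta> Y"
    using ex_other_if_two_le_card[OF eY(4) choice_funD[OF ch Y]] by blast
  define ch' where "ch' = ch(\<beta> := (ch \<beta>)(Y := g))"
  have ch': "choice_fun ch'" unfolding choice_fun_def ch'_def using choice_funD[OF ch] g(1) by auto
  have other: "length \<alpha> < length \<beta> \<Longrightarrow> ch' \<alpha> = ch \<alpha>" for \<alpha> by (auto simp: ch'_def)
  have short: "w \<in> config v ch' \<longleftrightarrow> w \<in> config v ch" if w: "length w \<le> length \<beta>" for w
  proof (rule config_agree_upto[where L = "length \<beta>"])
    show "length w \<le> length \<beta>" by (fact w)
  qed (simp_all add: other eY(1))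
  have "Neg g # \<beta> \<notin> config v ch"
  proof
    assume "Neg g # \<beta> \<in> config v ch"
    then obtain Y' where Y': "Y' \<in> Cv r C (r e)" "Neg g = Neg (ch \<beta> Y')"
      unfolding eY(1) config_Cons_Pos_iff by blast
    have "g \<in> Y'" using Y'(2) choice_funD[OF ch Cv_in_C[OF Y'(1)]] by simp
    then have "Y' = Y" using class_unique[OF Cv_in_C[OF Y'(1)] Y _ g(1)] by simp
    then show False using Y'(2) g(2) by simp
  qed
  moreover have "Neg g # \<beta> \<in> config v ch'"
    using config_Pos[of e \<gamma> v ch' Y] short[of \<beta>] \<beta>(1) eY by (simp add: ch'_def)
  ultimately show ?thesis using that[OF ch' _ short] by blast
qed

lemma mem_Vset_if_isolated_point:
  assumes v: "v \<in> E00 \<union> E01" and iso: "\<xi> \<in> \<Omega>\<^sub>v v" "openin (subtopology set_top (\<Omega>\<^sub>v v)) {\<xi>}"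
  shows "v \<in> Vset E00 E01 E1 r s C DE"
proof (rule ccontr)
  assume nV: "v \<notin> Vset E00 E01 E1 r s C DE"
  obtain F where F: "finite F" "\<forall>\<eta>\<in>\<Omega>\<^sub>v v. (\<forall>w\<in>F. w \<in> \<eta> \<longleftrightarrow> w \<in> \<xi>) \<longrightarrow> \<eta> = \<xi>"
    using iso(2) unfolding openin_singleton_set_top_iff by blast
  obtain N where N: "\<forall>w\<in>F. length w \<le> N"
    using F(1) finite_nat_set_iff_bounded_le[of "length ` F"] by auto
  define ch where "ch = choice_of \<xi>"
  have ch: "choice_fun ch" unfolding ch_def by (rule choice_fun_choice_of)
  have \<xi>: "\<xi> = config v ch" unfolding ch_def using Omega_v_eq_config[OF iso(1)] .
  obtain \<beta> where \<beta>: "\<beta> \<in> config v ch" "N \<le> length \<beta>" "choice_node \<beta>"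
    using config_deep_choice_node[OF nV v ch] by blast
  obtain ch' where ch': "choice_fun ch'" "config v ch' \<noteq> \<xi>"
    "\<And>w. length w \<le> length \<beta> \<Longrightarrow> w \<in> config v ch' \<longleftrightarrow> w \<in> \<xi>"
    using config_change_at_choice_node[OF ch \<beta>(1,3)] unfolding \<xi> by blast
  have "\<forall>w\<in>F. w \<in> config v ch' \<longleftrightarrow> w \<in> \<xi>" using ch'(3) N \<beta>(2) order.trans by blast
  then show False using F(2) config_in_Omega_v[OF ch'(1) v] ch'(2) by blast
qed

lemma isolated_point_iff_mem_Vset:
  assumes "v \<in> E00 \<union> E01"
  shows "(\<exists>\<xi>\<in>\<Omega>\<^sub>v v. openin (subtopology set_top (\<Omega>\<^sub>v v)) {\<xi>}) \<longleftrightarrow> v \<in> Vset E00 E01 E1 r s C DE"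
  using isolated_point_if_mem_Vset[OF assms] mem_Vset_if_isolated_point[OF assms] by blast

subsection \<open>The configuration space as a Cantor space\<close>

lemma Omega_v_subset_Omega: "\<Omega>\<^sub>v v \<subseteq> \<Omega>" unfolding Omega_v_def by auto

lemma Omega_covered_by_Omega_v:
  assumes "\<xi> \<in> \<Omega>"
  shows "\<exists>v\<in>E00 \<union> E01. \<xi> \<in> \<Omega>\<^sub>v v"
proof -
  from Omega_local[OF assms Omega_Nil[OF assms]] show ?thesis
  proof
    assume "\<exists>u\<in>E01. xi_at E1 \<xi> [] = Pos ` {e \<in> E1. s e = u}"
    then obtain u where u: "u \<in> E01" "xi_at E1 \<xi> [] = Pos ` {e \<in> E1. s e = u}" by blast
    obtain f where f: "f \<in> E1" "s f = u" using u(1) image_s by (metis imageE)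
    then have "Pos f \<in> xi_at E1 \<xi> []" using u(2) by blast
    then have "[Pos f] \<in> \<xi>" using Cons_mem_if_mem_xi_at by blast
    then have "\<xi> \<in> \<Omega>\<^sub>v u" unfolding mem_Omega_v_iff using assms u(1) f by auto
    then show ?thesis using u(1) by blast
  next
    assume "\<exists>u\<in>E00. \<exists>f. (\<forall>X\<in>Cv r C u. f X \<in> X) \<and> xi_at E1 \<xi> [] = {Neg (f X) |X. X \<in> Cv r C u}"
    then obtain u f where u: "u \<in> E00" "\<forall>X\<in>Cv r C u. f X \<in> X" "xi_at E1 \<xi> [] = {Neg (f X) |X. X \<in> Cv r C u}"
      by blast
    obtain e where e: "e \<in> E1" "r e = u" using u(1) image_r by (metis imageE)
    have X: "cls C e \<in> Cv r C u" using cls_in_Cv[OF e(1)] e(2) by simp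
    then have "Neg (f (cls C e)) \<in> xi_at E1 \<xi> []" using u(3) by blast
    then have m: "[Neg (f (cls C e))] \<in> \<xi>" using Cons_mem_if_mem_xi_at by blast
    have nu: "u \<notin> E01" using u(1) E00_E01_disjoint by blast
    have "\<xi> \<in> \<Omega>\<^sub>v u" unfolding mem_Omega_v_iff using assms nu X m u(2) by auto
    then show ?thesis using u(1) by blast
  qed
qed

lemma isolated_in_Omega_v_if_isolated_in_Omega:
  assumes "\<xi> \<in> \<Omega>\<^sub>v v" "openin (subtopology set_top \<Omega>) {\<xi>}"
  shows "openin (subtopology set_top (\<Omega>\<^sub>v v)) {\<xi>}"
proof -
  obtain F where F: "finite F" "\<forall>\<eta>\<in>\<Omega>. (\<forall>w\<in>F. (w \<in> \<eta>) = (w \<in> \<xi>)) \<longrightarrow> \<eta> = \<xi>"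
    using assms(2) unfolding openin_singleton_set_top_iff by blast
  have "\<forall>\<eta>\<in>\<Omega>\<^sub>v v. (\<forall>w\<in>F. (w \<in> \<eta>) = (w \<in> \<xi>)) \<longrightarrow> \<eta> = \<xi>"
  proof (intro ballI impI)
    fix \<eta> assume "\<eta> \<in> \<Omega>\<^sub>v v" "\<forall>w\<in>F. (w \<in> \<eta>) = (w \<in> \<xi>)"
    then show "\<eta> = \<xi>" using F(2) Omega_v_subset_Omega by blast
  qed
  then show ?thesis unfolding openin_singleton_set_top_iff using assms(1) F(1) by blast
qed

lemma isolated_in_Omega_if_isolated_in_Omega_v:
  assumes "openin (subtopology set_top (\<Omega>\<^sub>v v)) {\<xi>}"
  shows "openin (subtopology set_top \<Omega>) {\<xi>}"
proof -
  obtain F where F: "\<xi> \<in> \<Omega>\<^sub>v v" "finite F" "\<forall>\<eta>\<in>\<Omega>\<^sub>v v. (\<forall>w\<in>F. (w \<in> \<eta>) = (w \<in> \<xi>)) \<longrightarrow> \<eta> = \<xi>"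
    using assms unfolding openin_singleton_set_top_iff by blast
  define F' where "F' = F \<union> (\<lambda>\<sigma>. [\<sigma>]) ` letters E1"
  have fF': "finite F'" unfolding F'_def using F(2) finite_letters[OF finite_E1] by simp
  have "\<forall>\<eta>\<in>\<Omega>. (\<forall>w\<in>F'. (w \<in> \<eta>) = (w \<in> \<xi>)) \<longrightarrow> \<eta> = \<xi>"
  proof (intro ballI impI)
    fix \<eta> assume e: "\<eta> \<in> \<Omega>" "\<forall>w\<in>F'. (w \<in> \<eta>) = (w \<in> \<xi>)"
    have s1: "[Pos e] \<in> \<eta> \<longleftrightarrow> [Pos e] \<in> \<xi>" if "e \<in> E1" for e
    proof -
      have "[Pos e] \<in> F'" unfolding F'_def using that by simp
      then show ?thesis using e(2) by blast
    qed
    have s2: "[Neg e] \<in> \<eta> \<longleftrightarrow> [Neg e] \<in> \<xi>" if "e \<in> E1" for e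
    proof -
      have "[Neg e] \<in> F'" unfolding F'_def using that by simp
      then show ?thesis using e(2) by blast
    qed
    have "\<eta> \<in> \<Omega>\<^sub>v v"
    proof (cases "v \<in> E01")
      case True
      then obtain f where "f \<in> E1" "s f = v" "[Pos f] \<in> \<xi>" using F(1) unfolding mem_Omega_v_iff by auto
      then show ?thesis unfolding mem_Omega_v_iff using e(1) True s1 by (metis (mono_tags, lifting))
    next
      case False
      then obtain X f where X: "X \<in> Cv r C v" "f \<in> X" "[Neg f] \<in> \<xi>" using F(1) unfolding mem_Omega_v_iff by auto
      have "f \<in> E1" using Cv_memD[OF X(1,2)] by simp
      then have "[Neg f] \<in> \<eta>" using s2 X(3) by simp
      then show ?thesis unfolding mem_Omega_v_iff using e(1) False X(1,2) by (metis (mono_tags, lifting))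
    qed
    moreover have "\<forall>w\<in>F. (w \<in> \<eta>) = (w \<in> \<xi>)" using e(2) unfolding F'_def by blast
    ultimately show "\<eta> = \<xi>" using F(3) by blast
  qed
  moreover have "\<xi> \<in> \<Omega>" using F(1) Omega_v_subset_Omega by blast
  ultimately show ?thesis unfolding openin_singleton_set_top_iff using fF' by blast
qed

lemma Omega_no_isolated_point:
  assumes "Vset E00 E01 E1 r s C DE = {}" "\<xi> \<in> \<Omega>"
  shows "\<not> openin (subtopology set_top \<Omega>) {\<xi>}"
proof
  assume o: "openin (subtopology set_top \<Omega>) {\<xi>}"
  obtain v where v: "v \<in> E00 \<union> E01" "\<xi> \<in> \<Omega>\<^sub>v v" using Omega_covered_by_Omega_v[OF assms(2)] by blast
  have "openin (subtopology set_top (\<Omega>\<^sub>v v)) {\<xi>}" using isolated_in_Omega_v_if_isolated_in_Omega[OF v(2) o] .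
  then have "v \<in> Vset E00 E01 E1 r s C DE" using isolated_point_iff_mem_Vset[OF v(1)] v(2) by blast
  then show False using assms(1) by simp
qed

lemma mem_Omega_if_finitely_approximable:
  assumes "\<xi> \<subseteq> Fgrp E1" "\<And>F. finite F \<Longrightarrow> \<exists>\<eta>\<in>\<Omega>. \<forall>w\<in>F. (w \<in> \<eta>) = (w \<in> \<xi>)"
  shows "\<xi> \<in> \<Omega>"
  unfolding Omega_def
proof (intro CollectI conjI ballI allI)
  show "\<xi> \<subseteq> Fgrp E1" by fact
  obtain \<eta> where "\<eta> \<in> \<Omega>" "\<forall>w\<in>{[]}. (w \<in> \<eta>) = (w \<in> \<xi>)" using assms(2)[of "{[]}"] by blast
  then show "[] \<in> \<xi>" using Omega_Nil by blast
next
  fix \<alpha> k assume a: "\<alpha> \<in> \<xi>"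
  obtain \<eta> where e: "\<eta> \<in> \<Omega>" "\<forall>w\<in>{\<alpha>, drop k \<alpha>}. (w \<in> \<eta>) = (w \<in> \<xi>)" using assms(2)[of "{\<alpha>, drop k \<alpha>}"] by blast
  then have "\<alpha> \<in> \<eta>" using a by simp
  then have "drop k \<alpha> \<in> \<eta>" using Omega_drop[OF e(1)] by blast
  then show "drop k \<alpha> \<in> \<xi>" using e(2) by simp
next
  fix \<alpha> assume a: "\<alpha> \<in> \<xi>"
  define F where "F = insert \<alpha> ((\<lambda>\<sigma>. gmult \<sigma> \<alpha>) ` letters E1)"
  have "finite F" unfolding F_def using finite_letters[OF finite_E1] by simp
  then obtain \<eta> where e: "\<eta> \<in> \<Omega>" "\<forall>w\<in>F. (w \<in> \<eta>) = (w \<in> \<xi>)" using assms(2) by blast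
  have a': "\<alpha> \<in> \<eta>" using e(2) a unfolding F_def by simp
  have "xi_at E1 \<eta> \<alpha> = xi_at E1 \<xi> \<alpha>"
  proof (rule set_eqI)
    fix \<sigma>
    show "\<sigma> \<in> xi_at E1 \<eta> \<alpha> \<longleftrightarrow> \<sigma> \<in> xi_at E1 \<xi> \<alpha>"
      unfolding mem_xi_at_iff using e(2) unfolding F_def by blast
  qed
  then show "(\<exists>v\<in>E01. xi_at E1 \<xi> \<alpha> = Pos ` {e \<in> E1. s e = v}) \<or>
        (\<exists>v\<in>E00. \<exists>f. (\<forall>X\<in>Cv r C v. f X \<in> X) \<and> xi_at E1 \<xi> \<alpha> = {Neg (f X) |X. X \<in> Cv r C v})"
    using Omega_local[OF e(1) a'] by simp
qed

text \<open>Enumerating the free group identifies \<open>set_top\<close> on its subsets with \<open>cantor_top\<close>.\<close>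

definition word_enum :: "nat \<Rightarrow> 'e letter list" where "word_enum = from_nat_into (Fgrp E1)"
definition word_index :: "'e letter list \<Rightarrow> nat" where "word_index = inv_into UNIV word_enum"

lemma countable_Fgrp: "countable (Fgrp E1)"
proof -
  have "Fgrp E1 \<subseteq> lists (letters E1)" unfolding Fgrp_def reduced_def by auto
  moreover have "countable (lists (letters E1))"
    using countable_finite[OF finite_letters[OF finite_E1]] by simp
  ultimately show ?thesis using countable_subset by blast
qed

lemma infinite_Fgrp:
  assumes "E1 \<noteq> {}"
  shows "infinite (Fgrp E1)"
proof
  assume fin: "finite (Fgrp E1)"
  obtain e where e: "e \<in> E1" using assms by blast
  have "range (\<lambda>n. replicate n (Pos e)) \<subseteq> Fgrp E1" unfolding Fgrp_def using reduced_replicate[OF e] by auto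
  then have "finite (range (\<lambda>n. replicate n (Pos e)))" using fin finite_subset by blast
  moreover have "inj (\<lambda>n. replicate n (Pos e))" by (rule injI) (metis length_replicate)
  ultimately have "finite (UNIV :: nat set)" using finite_imageD by blast
  then show False by simp
qed

context
  assumes ne: "E1 \<noteq> {}"
begin

lemma bij_word_enum: "bij_betw word_enum UNIV (Fgrp E1)"
  unfolding word_enum_def using bij_betw_from_nat_into[OF countable_Fgrp infinite_Fgrp[OF ne]] .

lemma word_enum_in_Fgrp: "word_enum i \<in> Fgrp E1" using bij_betw_apply[OF bij_word_enum UNIV_I] .
lemma inj_word_enum: "inj word_enum" using bij_betw_imp_inj_on[OF bij_word_enum] .
lemma word_enum_word_index: "w \<in> Fgrp E1 \<Longrightarrow> word_enum (word_index w) = w"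
  unfolding word_index_def by (rule bij_betw_inv_into_right[OF bij_word_enum])
lemma word_index_word_enum: "word_index (word_enum i) = i"
  unfolding word_index_def using inv_into_f_f[OF inj_word_enum] by simp

definition char_seq :: "'e letter list set \<Rightarrow> nat \<Rightarrow> bool" where "char_seq \<xi> = (\<lambda>i. word_enum i \<in> \<xi>)"
definition seq_set :: "(nat \<Rightarrow> bool) \<Rightarrow> 'e letter list set" where "seq_set x = word_enum ` {i. x i}"

lemma mem_seq_set_iff: "w \<in> seq_set x \<longleftrightarrow> w \<in> Fgrp E1 \<and> x (word_index w)"
proof
  assume "w \<in> seq_set x"
  then obtain i where "x i" "w = word_enum i" unfolding seq_set_def by blast
  then show "w \<in> Fgrp E1 \<and> x (word_index w)" using word_enum_in_Fgrp word_index_word_enum by simp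
next
  assume "w \<in> Fgrp E1 \<and> x (word_index w)"
  then have "word_enum (word_index w) = w" "word_index w \<in> {i. x i}" using word_enum_word_index by auto
  then show "w \<in> seq_set x" unfolding seq_set_def by (metis image_eqI)
qed

lemma seq_set_char_seq:
  assumes "\<xi> \<subseteq> Fgrp E1"
  shows "seq_set (char_seq \<xi>) = \<xi>"
proof (rule set_eqI)
  fix w
  show "w \<in> seq_set (char_seq \<xi>) \<longleftrightarrow> w \<in> \<xi>"
  proof (cases "w \<in> Fgrp E1")
    case True then show ?thesis by (simp add: mem_seq_set_iff char_seq_def word_enum_word_index)
  next
    case False then show ?thesis using assms mem_seq_set_iff by blast
  qed
qed

lemma char_seq_seq_set: "char_seq (seq_set x) = x"
proof
  fix i show "char_seq (seq_set x) i = x i" unfolding char_seq_def mem_seq_set_iff using word_enum_in_Fgrp word_index_word_enum by simp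
qed

lemma continuous_map_char_seq: "continuous_map set_top cantor_top char_seq"
  unfolding cantor_top_def continuous_map_componentwise_UNIV
proof
  fix i
  have eq: "(\<lambda>\<xi>. char_seq \<xi> i) = (\<lambda>z. z (word_enum i)) \<circ> (\<lambda>\<xi> w. w \<in> \<xi>)" by (auto simp: char_seq_def)
  have "continuous_map (pullback_topology UNIV (\<lambda>\<xi> w. w \<in> \<xi>) bool_product) (discrete_topology UNIV)
          ((\<lambda>z. z (word_enum i)) \<circ> (\<lambda>\<xi> w. w \<in> \<xi>))"
    by (rule continuous_map_pullback) (rule continuous_map_product_projection, simp)
  then show "continuous_map set_top (discrete_topology UNIV) (\<lambda>\<xi>. char_seq \<xi> i)"
    unfolding set_top_def eq .
qed

lemma continuous_map_seq_set: "continuous_map cantor_top set_top seq_set"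
  unfolding set_top_def
proof (rule continuous_map_pullback')
  show "topspace cantor_top \<subseteq> seq_set -` UNIV" by simp
  show "continuous_map cantor_top bool_product ((\<lambda>\<xi> w. w \<in> \<xi>) \<circ> seq_set)"
    unfolding cantor_top_def continuous_map_componentwise_UNIV
  proof
    fix w
    show "continuous_map bool_product (discrete_topology UNIV) (\<lambda>x. ((\<lambda>\<xi> w. w \<in> \<xi>) \<circ> seq_set) x w)"
      by (rule continuous_map_bool_product_if_finite_dependence[of "{word_index w}"]) (auto simp: mem_seq_set_iff)
  qed
qed

lemma Omega_nonempty: "\<exists>\<xi>. \<xi> \<in> \<Omega>"
proof -
  obtain e where e: "e \<in> E1" using ne by blast
  have "s e \<in> E00 \<union> E01" using s_in_E01[OF e] by simp
  then show ?thesis using config_in_Omega[OF choice_fun_rank_choice] by blast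
qed

lemma char_seq_image_closed:
  assumes H: "\<And>n. \<exists>y\<in>char_seq ` \<Omega>. agree_upto n y x" shows "x \<in> char_seq ` \<Omega>"
proof -
  have "seq_set x \<in> \<Omega>"
  proof (rule mem_Omega_if_finitely_approximable)
    show "seq_set x \<subseteq> Fgrp E1" using mem_seq_set_iff by blast
    fix F :: "'e letter list set" assume fF: "finite F"
    have "finite (word_index ` (F \<inter> Fgrp E1))" using fF by simp
    then obtain m where m: "\<forall>j\<in>word_index ` (F \<inter> Fgrp E1). j \<le> m" using finite_nat_set_iff_bounded_le by blast
    obtain y where y: "y \<in> char_seq ` \<Omega>" "agree_upto (Suc m) y x" using H by blast
    then obtain \<eta> where e: "\<eta> \<in> \<Omega>" "y = char_seq \<eta>" by blast
    have "\<forall>w\<in>F. (w \<in> \<eta>) = (w \<in> seq_set x)"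
    proof
      fix w assume w: "w \<in> F"
      show "(w \<in> \<eta>) = (w \<in> seq_set x)"
      proof (cases "w \<in> Fgrp E1")
        case True
        then have "word_index w \<in> word_index ` (F \<inter> Fgrp E1)" using w by blast
        then have "word_index w < Suc m" using m by (metis le_imp_less_Suc)
        then have "y (word_index w) = x (word_index w)" using y(2) unfolding agree_upto_def by blast
        then show ?thesis using True e(2) word_enum_word_index[OF True] unfolding char_seq_def mem_seq_set_iff by simp
      next
        case False
        then show ?thesis using Omega_subset_Fgrp[OF e(1)] mem_seq_set_iff by blast
      qed
    qed
    then show "\<exists>\<eta>\<in>\<Omega>. \<forall>w\<in>F. (w \<in> \<eta>) = (w \<in> seq_set x)" using e(1) by blast
  qed
  then show ?thesis using char_seq_seq_set[of x] by (metis image_eqI)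
qed

lemma char_seq_image_perfect:
  assumes V: "Vset E00 E01 E1 r s C DE = {}" and "x \<in> char_seq ` \<Omega>"
  shows "\<exists>y\<in>char_seq ` \<Omega>. y \<noteq> x \<and> agree_upto n y x"
proof -
  obtain \<xi> where x: "\<xi> \<in> \<Omega>" "x = char_seq \<xi>" using assms(2) by blast
  have "\<not> openin (subtopology set_top \<Omega>) {\<xi>}" using Omega_no_isolated_point[OF V x(1)] .
  then have "\<not> (\<forall>\<eta>\<in>\<Omega>. (\<forall>w\<in>word_enum ` {..<n}. (w \<in> \<eta>) = (w \<in> \<xi>)) \<longrightarrow> \<eta> = \<xi>)"
    unfolding openin_singleton_set_top_iff using x(1) by blast
  then obtain \<eta> where e: "\<eta> \<in> \<Omega>" "\<forall>w\<in>word_enum ` {..<n}. (w \<in> \<eta>) = (w \<in> \<xi>)" "\<eta> \<noteq> \<xi>" by blast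
  have "char_seq \<eta> \<noteq> x"
  proof
    assume "char_seq \<eta> = x"
    then have "seq_set (char_seq \<eta>) = seq_set (char_seq \<xi>)" using x(2) by simp
    then show False using seq_set_char_seq[OF Omega_subset_Fgrp[OF e(1)]] seq_set_char_seq[OF Omega_subset_Fgrp[OF x(1)]] e(3) by simp
  qed
  moreover have "agree_upto n (char_seq \<eta>) x" unfolding agree_upto_def char_seq_def x(2) using e(2) by auto
  ultimately show ?thesis using e(1) by blast
qed

lemma perfect_cantor_subset_image:
  assumes "Vset E00 E01 E1 r s C DE = {}" shows "perfect_cantor_subset (char_seq ` \<Omega>)"
  by (rule perfect_cantor_subset.intro)
    (use Omega_nonempty char_seq_image_closed char_seq_image_perfect[OF assms] in blast)+

lemma homeomorphic_maps_Omega: "homeomorphic_maps (subtopology set_top \<Omega>) (subtopology cantor_top (char_seq ` \<Omega>)) char_seq seq_set"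
  unfolding homeomorphic_maps_def
proof (intro conjI)
  show "continuous_map (subtopology set_top \<Omega>) (subtopology cantor_top (char_seq ` \<Omega>)) char_seq"
    unfolding continuous_map_in_subtopology
    using continuous_map_from_subtopology[OF continuous_map_char_seq] by auto
  show "continuous_map (subtopology cantor_top (char_seq ` \<Omega>)) (subtopology set_top \<Omega>) seq_set"
    unfolding continuous_map_in_subtopology
    using continuous_map_from_subtopology[OF continuous_map_seq_set] seq_set_char_seq Omega_subset_Fgrp by auto
  show "\<forall>x\<in>topspace (subtopology set_top \<Omega>). seq_set (char_seq x) = x"
    using seq_set_char_seq Omega_subset_Fgrp by auto
  show "\<forall>y\<in>topspace (subtopology cantor_top (char_seq ` \<Omega>)). char_seq (seq_set y) = y"
    using char_seq_seq_set by auto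
qed

lemma Omega_homeomorphic_cantor_top:
  assumes V: "Vset E00 E01 E1 r s C DE = {}"
  shows "subtopology set_top \<Omega> homeomorphic_space cantor_top"
proof -
  have "subtopology set_top \<Omega> homeomorphic_space subtopology cantor_top (char_seq ` \<Omega>)"
    using homeomorphic_maps_Omega homeomorphic_maps_imp_homeomorphic_space by blast
  also have "subtopology cantor_top (char_seq ` \<Omega>) homeomorphic_space cantor_top"
    using perfect_cantor_subset.homeomorphic_cantor_top[OF perfect_cantor_subset_image[OF V]] .
  finally show ?thesis .
qed

end

lemma Omega_not_homeomorphic_cantor_top:
  assumes "v \<in> Vset E00 E01 E1 r s C DE"
  shows "\<not> (subtopology set_top \<Omega> homeomorphic_space cantor_top)"
proof
  assume "subtopology set_top \<Omega> homeomorphic_space cantor_top"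
  then obtain f where f: "homeomorphic_map (subtopology set_top \<Omega>) cantor_top f"
    unfolding homeomorphic_space by blast
  have v: "v \<in> E00 \<union> E01" using assms unfolding Vset_def by blast
  obtain \<xi> where "\<xi> \<in> \<Omega>\<^sub>v v" "openin (subtopology set_top (\<Omega>\<^sub>v v)) {\<xi>}" using isolated_point_iff_mem_Vset[OF v] assms by blast
  then have "openin (subtopology set_top \<Omega>) {\<xi>}" using isolated_in_Omega_if_isolated_in_Omega_v by blast
  then have "openin cantor_top {f \<xi>}" using homeomorphic_map_openin_singleton[OF f] by blast
  then show False using cantor_top_no_isolated_point by blast
qed

end

theorem proposition9:
  fixes E00 E01 :: "'v set" and E1 :: "'e set" and r s :: "'e \<Rightarrow> 'v" and C :: "'e set set"
  assumes "fin_bip_sep_graph E00 E01 E1 r s C"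
  shows "(\<forall>v \<in> E00 \<union> E01.
            (\<exists>\<xi>\<in>Omega_v E00 E01 E1 r s C v.
                openin (subtopology set_top (Omega_v E00 E01 E1 r s C v)) {\<xi>})
            \<longleftrightarrow> v \<in> Vset E00 E01 E1 r s C (dead_ends E1 r s C))
       \<and> (E1 \<noteq> {} \<longrightarrow>
            ((subtopology set_top (Omega E00 E01 E1 r s C) homeomorphic_space cantor_top)
             \<longleftrightarrow> Vset E00 E01 E1 r s C (dead_ends E1 r s C) = {}))"
proof -
  interpret bipartite_separated_graph E00 E01 E1 r s C
    using assms by (rule bipartite_separated_graph.intro)
  show ?thesis
    using isolated_point_iff_mem_Vset Omega_homeomorphic_cantor_top Omega_not_homeomorphic_cantor_top
    by (intro conjI ballI impI) blast+
qed

end
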